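(* Let $\{\lambda_n\}_{n=0}^\infty$ be a non-trivial non-negative (classical) multiplier sequence and let $T$ be the linear operator on $\mathbb{R}[x]$ with $T(H_n)=\lambda_nH_n$ for all $n$, so that $G_T(x,y)=e^{y^2/4}\sum_{k\ge0}\frac{\lambda_kH_k(x)(-y)^k}{2^kk!}$. Then $G_T(-x,y)\notin\mathscr{L\text{-}P}_2(\mathbb{R})$.
   Context: The Hermite polynomials are defined by $\exp(2xt-t^2)=\sum_{n\ge0}\frac{H_n(x)}{n!}t^n$. A multiplier sequence is a real sequence $\{\lambda_n\}$ such that $x^n\mapsto\lambda_nx^n$ maps real-rooted polynomials to real-rooted polynomials. A sequence is trivial if there is $k$ with $\lambda_n=0$ for all $n\notin\{k,k+1\}$. The symbol of a linear operator $T$ on $\mathbb{R}[x]$ is $G_T(x,y)=\sum_{n\ge0}\frac{(-1)^nT(x^n)}{n!}y^n$. A polynomial in $\mathbb{C}[x,y]$ is stable if it has no zero with $\operatorname{Im}x>0,\operatorname{Im}y>0$; $\mathscr{L\text{-}P}_2(\mathbb{R})$ is the class of real entire functions of two variables that are limits, uniformly on compact subsets of $\mathbb{C}^2$, of real stable polynomials. *)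

theory Defs
  imports "HOL-Analysis.Analysis" "HOL-Computational_Algebra.Polynomial"
begin

text \<open>Physicists' Hermite polynomials, given by the standard three-term recurrence
  equivalent to the generating function exp(2xt - t^2) = sum H_n(x) t^n / n!.\<close>
fun hermite :: "nat \<Rightarrow> real poly" where
  "hermite 0 = 1"
| "hermite (Suc 0) = [:0, 2:]"
| "hermite (Suc (Suc n)) = [:0, 2:] * hermite (Suc n) - smult (2 * real (Suc n)) (hermite n)"

definition real_rooted :: "real poly \<Rightarrow> bool" where
  "real_rooted p \<longleftrightarrow> p = 0 \<or> (\<forall>z::complex. poly (map_poly of_real p) z = 0 \<longrightarrow> Im z = 0)"

definition diag_op :: "(nat \<Rightarrow> real) \<Rightarrow> real poly \<Rightarrow> real poly" where
  "diag_op lam p = (\<Sum>n\<le>degree p. monom (lam n * coeff p n) n)"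

definition multiplier_sequence :: "(nat \<Rightarrow> real) \<Rightarrow> bool" where
  "multiplier_sequence lam \<longleftrightarrow> (\<forall>p. real_rooted p \<longrightarrow> real_rooted (diag_op lam p))"

definition trivial_seq :: "(nat \<Rightarrow> real) \<Rightarrow> bool" where
  "trivial_seq lam \<longleftrightarrow> (\<exists>k. \<forall>n. n \<notin> {k, Suc k} \<longrightarrow> lam n = 0)"

definition symbol :: "(real poly \<Rightarrow> real poly) \<Rightarrow> complex \<Rightarrow> complex \<Rightarrow> complex" where
  "symbol T x y = (\<Sum>n. (-1) ^ n * poly (map_poly of_real (T (monom 1 n))) x * y ^ n / of_nat (fact n))"

definition real_poly2 :: "(complex \<Rightarrow> complex \<Rightarrow> complex) \<Rightarrow> bool" where
  "real_poly2 f \<longleftrightarrow> (\<exists>N (c :: nat \<Rightarrow> nat \<Rightarrow> real).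
     \<forall>x y. f x y = (\<Sum>i\<le>N. \<Sum>j\<le>N. of_real (c i j) * x ^ i * y ^ j))"

definition stable2 :: "(complex \<Rightarrow> complex \<Rightarrow> complex) \<Rightarrow> bool" where
  "stable2 f \<longleftrightarrow> (\<forall>x y. Im x > 0 \<longrightarrow> Im y > 0 \<longrightarrow> f x y \<noteq> 0)"

text \<open>Laguerre--P\'olya class in two variables: locally uniform limits on C^2 of real stable polynomials.\<close>
definition LP2 :: "(complex \<Rightarrow> complex \<Rightarrow> complex) \<Rightarrow> bool" where
  "LP2 f \<longleftrightarrow> (\<exists>p :: nat \<Rightarrow> complex \<Rightarrow> complex \<Rightarrow> complex.
     (\<forall>k. real_poly2 (p k) \<and> stable2 (p k)) \<and>
     (\<forall>K :: (complex \<times> complex) set. compact K \<longrightarrow>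
        uniform_limit K (\<lambda>k z. p k (fst z) (snd z)) (\<lambda>z. f (fst z) (snd z)) sequentially))"

end

theory Submission
  imports Defs "HOL-Computational_Algebra.Fundamental_Theorem_Algebra"
begin

(*
  Suppose the reflected symbol
  f(x,y) = G_T(-x,y) were a locally uniform limit of real stable polynomials.  On the line
  (x,y) = (alpha z, z), alpha > 0, which maps the upper half plane into the product of upper
  half planes, these become real-rooted polynomials G_k converging uniformly on circles to
  F(z) = f(alpha z, z).  So the Taylor coefficients c_j of F are limits of coefficients of
  real-rooted polynomials and obey Newton's inequality j!(j+2)! c_j c_{j+2} <= ((j+1)! c_{j+1})^2.
  Hermite parity forces c_j = 0 for odd j, whereas for j = 2m, 2m+2, with lam_m, lam_{m+1} > 0
  adjacent positive terms (non-triviality plus absence of gaps), c_j is a polynomial in alpha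
  with positive leading coefficient; a large alpha contradicts Newton's inequality.
*)

definition cpoly :: "real poly \<Rightarrow> complex poly" where
  "cpoly p = map_poly of_real p"

lemma coeff_cpoly [simp]: "coeff (cpoly p) n = of_real (coeff p n)"
  by (simp add: cpoly_def coeff_map_poly)

lemma cpoly_0 [simp]: "cpoly 0 = 0"
  and cpoly_1 [simp]: "cpoly 1 = 1"
  and cpoly_add [simp]: "cpoly (p + q) = cpoly p + cpoly q"
  and cpoly_diff [simp]: "cpoly (p - q) = cpoly p - cpoly q"
  and cpoly_smult [simp]: "cpoly (smult c p) = smult (of_real c) (cpoly p)"
  and cpoly_mult [simp]: "cpoly (p * q) = cpoly p * cpoly q"
  and cpoly_pderiv [simp]: "cpoly (pderiv p) = pderiv (cpoly p)"
  and cpoly_monom [simp]: "cpoly (monom c n) = monom (of_real c) n"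
  and cpoly_pCons [simp]: "cpoly (pCons a p) = pCons (of_real a) (cpoly p)"
  by (auto intro!: poly_eqI simp: coeff_1 coeff_mult coeff_pderiv coeff_monom coeff_pCons
      split: nat.splits)

lemma cpoly_power [simp]: "cpoly (p ^ n) = cpoly p ^ n"
  by (induction n) simp_all

lemma cpoly_sum: "cpoly (\<Sum>k\<in>A. f k) = (\<Sum>k\<in>A. cpoly (f k))"
  by (induction A rule: infinite_finite_induct) auto

lemma degree_cpoly [simp]: "degree (cpoly p) = degree p"
  by (simp add: cpoly_def degree_map_poly)

lemma poly_cpoly_of_real: "poly (cpoly p) (of_real x) = of_real (poly p x)"
  by (induction p) auto

lemma poly_cpoly_cnj: "poly (cpoly p) (cnj z) = cnj (poly (cpoly p) z)"
  by (subst poly_cnj_real) auto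

lemma sum_atMost_extend:
  fixes f :: "nat \<Rightarrow> 'a::comm_monoid_add"
  assumes "M \<le> N" "\<And>k. M < k \<Longrightarrow> f k = 0"
  shows "(\<Sum>k\<le>N. f k) = (\<Sum>k\<le>M. f k)"
  using assms by (intro sum.mono_neutral_right) auto

lemma poly_cpoly_sum:
  "degree P \<le> n \<Longrightarrow> poly (cpoly P) w = (\<Sum>i\<le>n. of_real (coeff P i) * w ^ i)"
  by (simp add: poly_altdef) (rule sum_atMost_extend[symmetric], auto simp: coeff_eq_0)

section \<open>Real-rooted polynomials\<close>

lemma real_rooted_iff: "real_rooted p \<longleftrightarrow> p = 0 \<or> (\<forall>z. poly (cpoly p) z = 0 \<longrightarrow> Im z = 0)"
  by (simp add: real_rooted_def cpoly_def)

text \<open>Non-real roots come in conjugate pairs, so it suffices to exclude roots in the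
  open upper half plane.\<close>
lemma real_rootedI_upper:
  assumes "\<And>z. Im z > 0 \<Longrightarrow> poly (cpoly p) z \<noteq> 0"
  shows "real_rooted p"
  unfolding real_rooted_iff
proof (intro disjI2 allI impI)
  fix z assume z: "poly (cpoly p) z = 0"
  show "Im z = 0"
  proof (rule ccontr)
    assume "Im z \<noteq> 0"
    then have "Im z > 0 \<or> Im (cnj z) > 0" by force
    moreover have "poly (cpoly p) (cnj z) = 0" using z by (simp add: poly_cpoly_cnj)
    ultimately show False using assms z by blast
  qed
qed

lemma real_rooted_nonzero:
  "real_rooted q \<Longrightarrow> q \<noteq> 0 \<Longrightarrow> Im z \<noteq> 0 \<Longrightarrow> poly (cpoly q) z \<noteq> 0"
  unfolding real_rooted_iff by auto

lemma real_rooted_factor_cancel: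
  assumes "p \<noteq> 0" "real_rooted (p * q)"
  shows "real_rooted q"
  using assms by (cases "q = 0") (auto simp: real_rooted_iff)

lemma real_rooted_split_root:
  assumes "real_rooted q" "degree q > 0"
  obtains r h where "q = [:-r, 1:] * h" "real_rooted h" "h \<noteq> 0"
proof -
  have q0: "q \<noteq> 0" using assms(2) by auto
  have "\<not> constant (poly (cpoly q))" using assms(2) by (simp add: constant_degree)
  then obtain z where z: "poly (cpoly q) z = 0" using fundamental_theorem_of_algebra by blast
  have "z = of_real (Re z)"
    using assms(1) z q0 by (simp add: real_rooted_iff complex_eq_iff)
  then have "poly q (Re z) = 0" using z poly_cpoly_of_real[of q "Re z"] by simp
  then obtain h where h: "q = [:-Re z, 1:] * h" using poly_eq_0_iff_dvd by blast
  with q0 assms(1) show ?thesis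
    by (intro that[OF h]) (auto intro: real_rooted_factor_cancel[of "[:-Re z, 1:]"])
qed

lemma degree_linear_factor:
  fixes h :: "real poly"
  shows "h \<noteq> 0 \<Longrightarrow> degree ([:-r, 1:] * h) = degree h + 1"
  by (subst degree_mult_eq) auto

text \<open>The logarithmic derivative q'/q of a real-rooted polynomial maps the upper half
  plane into the lower half plane, since it is a sum of terms 1/(z - r) with r real.\<close>
lemma real_rooted_logderiv_Im_neg:
  assumes "real_rooted q" "degree q > 0" "Im z > 0"
  shows "Im (poly (cpoly (pderiv q)) z / poly (cpoly q) z) < 0"
  using assms
proof (induction "degree q" arbitrary: q rule: less_induct)
  case less
  obtain r h where h: "q = [:-r, 1:] * h" "real_rooted h" "h \<noteq> 0"
    using real_rooted_split_root less.prems by blast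
  have hz: "poly (cpoly h) z \<noteq> 0" using real_rooted_nonzero h less.prems by auto
  have zr: "z - of_real r \<noteq> 0" using less.prems(3) by (auto simp: complex_eq_iff)
  have pq: "poly (cpoly q) z = (z - of_real r) * poly (cpoly h) z"
    by (simp add: h(1) algebra_simps)
  have "pderiv q = [:-r, 1:] * pderiv h + h"
    unfolding h(1) pderiv_mult by (simp add: pderiv_pCons)
  then have pdq: "poly (cpoly (pderiv q)) z = (z - of_real r) * poly (cpoly (pderiv h)) z + poly (cpoly h) z"
    by (simp only: cpoly_add cpoly_mult poly_add poly_mult) simp
  have "poly (cpoly (pderiv q)) z / poly (cpoly q) z
      = poly (cpoly (pderiv h)) z / poly (cpoly h) z + 1 / (z - of_real r)"
    unfolding pq pdq using hz zr by (simp add: field_simps)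
  moreover have "Im (1 / (z - of_real r)) < 0"
    using less.prems(3) zr by (simp add: Im_divide divide_neg_pos add_nonneg_pos)
  moreover have "Im (poly (cpoly (pderiv h)) z / poly (cpoly h) z) \<le> 0"
  proof (cases "degree h = 0")
    case True
    then show ?thesis by (simp add: pderiv_eq_0_iff[symmetric])
  next
    case False
    then show ?thesis
      using less.hyps[of h] degree_linear_factor[OF h(3)] h less.prems by fastforce
  qed
  ultimately show ?case by simp
qed

lemma real_rooted_pderiv:
  assumes "real_rooted q"
  shows "real_rooted (pderiv q)"
proof (cases "degree q = 0")
  case True
  then show ?thesis by (simp add: pderiv_eq_0_iff[symmetric] real_rooted_def)
next
  case False
  show ?thesis
  proof (rule real_rootedI_upper)
    fix z :: complex assume z: "Im z > 0"
    show "poly (cpoly (pderiv q)) z \<noteq> 0"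
      using real_rooted_logderiv_Im_neg[OF assms _ z] False by auto
  qed
qed

lemma real_rooted_higher_pderiv: "real_rooted q \<Longrightarrow> real_rooted ((pderiv ^^ j) q)"
  by (induction j) (auto intro: real_rooted_pderiv)

lemma coeff_higher_pderiv:
  fixes q :: "real poly"
  shows "coeff ((pderiv ^^ j) q) i = coeff q (i + j) * (fact (i + j) / fact i)"
proof (induction j arbitrary: i)
  case 0
  then show ?case by simp
next
  case (Suc j)
  have "coeff ((pderiv ^^ Suc j) q) i = of_nat (Suc i) * coeff ((pderiv ^^ j) q) (Suc i)"
    by (simp add: coeff_pderiv)
  also have "\<dots> = coeff q (i + Suc j) * (fact (i + Suc j) / fact i)"
    by (simp only: Suc fact_Suc[of i]) (simp add: field_simps del: fact_Suc of_nat_Suc)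
  finally show ?case .
qed

lemma real_rooted_low_coeffs: "real_rooted q \<Longrightarrow> 2 * coeff q 0 * coeff q 2 \<le> (coeff q 1)\<^sup>2"
proof (induction "degree q" arbitrary: q rule: less_induct)
  case less
  show ?case
  proof (cases "degree q = 0")
    case True
    then have "coeff q 2 = 0" by (auto intro: coeff_eq_0)
    then show ?thesis by simp
  next
    case False
    then obtain r h where h: "q = [:-r, 1:] * h" "real_rooted h" "h \<noteq> 0"
      using real_rooted_split_root[OF less.prems] by (metis gr0I)
    then have IH: "2 * coeff h 0 * coeff h 2 \<le> (coeff h 1)\<^sup>2"
      using less degree_linear_factor[of h r] by auto
    have "(coeff q 1)\<^sup>2 - 2 * coeff q 0 * coeff q 2
        = r\<^sup>2 * ((coeff h 1)\<^sup>2 - 2 * coeff h 0 * coeff h 2) + (coeff h 0)\<^sup>2"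
      by (simp add: h mult_pCons_left coeff_pCons numeral_2_eq_2 algebra_simps power2_eq_square)
    moreover have "r\<^sup>2 * ((coeff h 1)\<^sup>2 - 2 * coeff h 0 * coeff h 2) \<ge> 0"
      using IH by simp
    ultimately show ?thesis by (smt (verit) zero_le_power2)
  qed
qed

text \<open>Newton's inequality for real-rooted polynomials, obtained by applying the previous
  lemma to the j-th derivative.\<close>
lemma real_rooted_newton:
  assumes "real_rooted q"
  shows "fact j * fact (j + 2) * coeff q j * coeff q (j + 2) \<le> (fact (j + 1))\<^sup>2 * (coeff q (j + 1))\<^sup>2"
proof -
  have "2 * coeff ((pderiv ^^ j) q) 0 * coeff ((pderiv ^^ j) q) 2 \<le> (coeff ((pderiv ^^ j) q) 1)\<^sup>2"
    by (rule real_rooted_low_coeffs[OF real_rooted_higher_pderiv[OF assms]])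
  then show ?thesis
    by (simp add: coeff_higher_pderiv add.commute power_mult_distrib) (simp add: mult_ac)
qed

lemma real_rooted_newton_limit:
  assumes "\<And>k. real_rooted (G k)" and lim: "\<And>i. (\<lambda>k. coeff (G k) i) \<longlonglongrightarrow> c i"
  shows "fact j * fact (j + 2) * c j * c (j + 2) \<le> (fact (j + 1))\<^sup>2 * (c (j + 1))\<^sup>2"
proof (rule LIMSEQ_le)
  show "(\<lambda>k. fact j * fact (j + 2) * coeff (G k) j * coeff (G k) (j + 2))
      \<longlonglongrightarrow> fact j * fact (j + 2) * c j * c (j + 2)"
    by (intro tendsto_intros lim)
  show "(\<lambda>k. (fact (j + 1))\<^sup>2 * (coeff (G k) (j + 1))\<^sup>2) \<longlonglongrightarrow> (fact (j + 1))\<^sup>2 * (c (j + 1))\<^sup>2"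
    by (intro tendsto_intros lim)
qed (use real_rooted_newton assms(1) in blast)

lemma real_rooted_quadratic_discr:
  assumes "real_rooted q" "degree q \<le> 2"
  shows "4 * coeff q 0 * coeff q 2 \<le> (coeff q 1)\<^sup>2"
proof (cases "degree q = 0")
  case True
  then have "coeff q 2 = 0" by (auto intro: coeff_eq_0)
  then show ?thesis by simp
next
  case False
  then obtain r h where h: "q = [:-r, 1:] * h" "h \<noteq> 0"
    using real_rooted_split_root[OF assms(1)] by (metis gr0I)
  have "coeff h 2 = 0"
    using assms(2) degree_linear_factor[OF h(2), of r] h(1) by (intro coeff_eq_0) auto
  then have c: "coeff q 0 = - r * coeff h 0" "coeff q 1 = - r * coeff h 1 + coeff h 0"
      "coeff q 2 = coeff h 1"
    by (simp_all add: h mult_pCons_left coeff_pCons numeral_2_eq_2)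
  have "(coeff q 1)\<^sup>2 - 4 * coeff q 0 * coeff q 2 = (r * coeff h 1 + coeff h 0)\<^sup>2"
    unfolding c by (simp add: algebra_simps power2_eq_square)
  then show ?thesis by (smt (verit) zero_le_power2)
qed

lemma real_rooted_monom_binomial: "real_rooted (monom 1 a * [:1, 1:] ^ j)"
proof (rule real_rootedI_upper)
  fix z :: complex assume "Im z > 0"
  then have "z \<noteq> 0" "1 + z \<noteq> 0" by (auto simp: complex_eq_iff)
  then show "poly (cpoly (monom 1 a * [:1, 1:] ^ j)) z \<noteq> 0"
    by (simp add: poly_monom)
qed

section \<open>Multiplier sequences\<close>

lemma coeff_diag_op: "coeff (diag_op lam p) i = lam i * coeff p i"
proof -
  have "coeff (diag_op lam p) i = (\<Sum>n\<le>degree p. if n = i then lam n * coeff p n else 0)"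
    by (simp add: diag_op_def coeff_sum coeff_monom)
  also have "\<dots> = lam i * coeff p i" by (auto simp: coeff_eq_0)
  finally show ?thesis .
qed

lemma coeff_binomial_power: "coeff ([:1, 1:] ^ j :: real poly) l = of_nat (j choose l)"
proof (cases "l \<le> j")
  case False
  then show ?thesis by (simp add: coeff_eq_0 degree_linear_power binomial_eq_0)
qed (simp add: coeff_linear_poly_power)

lemma coeff_diag_op_monom_binomial:
  "coeff (diag_op lam (monom 1 a * [:1, 1:] ^ j)) (a + l) = lam (a + l) * of_nat (j choose l)"
  by (simp add: coeff_diag_op coeff_monom_mult coeff_binomial_power)

text \<open>Turan's inequality for multiplier sequences, from the test polynomial x^k (1 + x)^2.\<close>
lemma multiplier_turan:
  assumes "multiplier_sequence lam"
  shows "lam k * lam (Suc (Suc k)) \<le> (lam (Suc k))\<^sup>2"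
proof -
  let ?q = "[:lam k, 2 * lam (Suc k), lam (Suc (Suc k)):]"
  have "diag_op lam (monom 1 k * [:1, 1:] ^ 2) = monom 1 k * ?q"
  proof (rule poly_eqI)
    fix i
    show "coeff (diag_op lam (monom 1 k * [:1, 1:] ^ 2)) i = coeff (monom 1 k * ?q) i"
    proof (cases "i < k")
      case False
      then obtain l where l: "i = k + l" using le_iff_add by (metis not_less)
      show ?thesis
        unfolding l coeff_diag_op_monom_binomial coeff_monom_mult
        by (auto simp: coeff_pCons numeral_2_eq_2 split: nat.splits)
    qed (unfold coeff_diag_op coeff_monom_mult, simp)
  qed
  then have "real_rooted (monom 1 k * ?q)"
    using assms real_rooted_monom_binomial unfolding multiplier_sequence_def by metis
  then have "real_rooted ?q" by (rule real_rooted_factor_cancel[rotated]) simp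
  then have "4 * lam k * lam (Suc (Suc k)) \<le> (2 * lam (Suc k))\<^sup>2"
    using real_rooted_quadratic_discr[of ?q] by (simp add: degree_pCons_eq_if numeral_2_eq_2)
  then show ?thesis by (simp add: power2_eq_square)
qed

lemma binomial_upper_root:
  assumes "c > 0" "a > 0" "j \<ge> 2"
  obtains z where "Im z > 0" "of_real a + of_real c * z ^ j = 0"
proof -
  define r where "r = root j (a / c)"
  have r0: "r > 0" and rj: "r ^ j = a / c" using assms by (simp_all add: r_def)
  define z where "z = of_real r * cis (pi / real j)"
  have "cis (pi / real j) ^ j = cis (real j * (pi / real j))" by (rule Complex.DeMoivre)
  also have "real j * (pi / real j) = pi" using assms by simp
  finally have "z ^ j = - of_real (a / c)"
    unfolding z_def power_mult_distrib by (simp add: rj flip: of_real_power)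
  moreover have "sin (pi / real j) > 0"
    using assms by (intro sin_gt_zero) (auto simp: field_simps)
  then have "Im z > 0" using r0 by (simp add: z_def)
  ultimately show ?thesis using assms by (intro that) auto
qed

text \<open>Otherwise the image of x^a (1 + x)^j would be
  x^a (lam_a + lam_{a+j} x^j), which has non-real roots.\<close>
lemma multiplier_no_gap:
  assumes ms: "multiplier_sequence lam" and nn: "\<forall>n. lam n \<ge> 0"
    and a: "lam a > 0" "lam (Suc a) = 0"
  shows "j \<ge> 1 \<Longrightarrow> lam (a + j) = 0"
proof (induction j rule: less_induct)
  case (less j)
  show ?case
  proof (cases "j = 1")
    case True
    then show ?thesis using a by simp
  next
    case False
    then have j2: "j \<ge> 2" using less.prems by simp
    let ?q = "[:lam a:] + monom (lam (a + j)) j"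
    have "diag_op lam (monom 1 a * [:1, 1:] ^ j) = monom 1 a * ?q"
    proof (rule poly_eqI)
      fix i
      show "coeff (diag_op lam (monom 1 a * [:1, 1:] ^ j)) i = coeff (monom 1 a * ?q) i"
      proof (cases "i < a")
        case False
        then obtain l where l: "i = a + l" using le_iff_add by (metis not_less)
        have "0 < l \<Longrightarrow> l < j \<Longrightarrow> lam (a + l) = 0" using less.IH by simp
        then show ?thesis
          unfolding l coeff_diag_op_monom_binomial coeff_monom_mult using j2
          by (cases "l = 0"; cases "l < j"; cases "l = j")
             (auto simp: coeff_monom coeff_pCons binomial_eq_0 split: nat.splits)
      qed (unfold coeff_diag_op coeff_monom_mult, simp)
    qed
    then have "real_rooted (monom 1 a * ?q)"
      using ms real_rooted_monom_binomial unfolding multiplier_sequence_def by metis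
    then have rq: "real_rooted ?q" by (rule real_rooted_factor_cancel[rotated]) simp
    have q0: "?q \<noteq> 0"
      using a j2 by (auto dest: arg_cong[of _ _ "\<lambda>p. coeff p 0"] simp: coeff_monom)
    show ?thesis
    proof (rule ccontr)
      assume "lam (a + j) \<noteq> 0"
      then have "lam (a + j) > 0" using nn[rule_format, of "a + j"] by linarith
      then obtain z where "Im z > 0" "of_real (lam a) + of_real (lam (a + j)) * z ^ j = 0"
        using binomial_upper_root a j2 by metis
      then show False using real_rooted_nonzero[OF rq q0, of z] by (simp add: poly_monom)
    qed
  qed
qed

lemma multiplier_adjacent_positive:
  assumes ms: "multiplier_sequence lam" and nn: "\<forall>n. lam n \<ge> 0"
    and nt: "\<not> trivial_seq lam"
  obtains m where "lam m > 0" "lam (Suc m) > 0" "\<forall>k<m. lam k = 0"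
proof -
  have ex: "\<exists>n. lam n \<noteq> 0" using nt unfolding trivial_seq_def by blast
  define m where "m = (LEAST n. lam n \<noteq> 0)"
  have "lam m \<noteq> 0" unfolding m_def using ex by (rule LeastI_ex)
  then have mpos: "lam m > 0" using nn[rule_format, of m] by linarith
  have below: "\<forall>k<m. lam k = 0" unfolding m_def using not_less_Least by blast
  have "lam (Suc m) > 0"
  proof (rule ccontr)
    assume "\<not> lam (Suc m) > 0"
    then have z: "lam (Suc m) = 0" using nn[rule_format, of "Suc m"] by linarith
    have "lam n = 0" if "n \<notin> {m, Suc m}" for n
    proof (cases "n < m")
      case False
      then obtain j where j: "n = m + j" using le_Suc_ex[of m n] by force
      then have "j \<ge> 1" using that by auto
      then show ?thesis using multiplier_no_gap[OF ms nn mpos z] j by simp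
    qed (use below in simp)
    then show False using nt unfolding trivial_seq_def by blast
  qed
  with mpos below show ?thesis using that by blast
qed

lemma multiplier_zero_persists:
  assumes ms: "multiplier_sequence lam" and nn: "\<forall>n. lam n \<ge> 0"
    and m: "lam m > 0" and k: "k \<ge> m" "lam k = 0"
  shows "lam (k + j) = 0"
proof -
  define A where "A = {a. a < k \<and> lam a > 0}"
  have "m \<in> A" using m k by (auto simp: A_def order.order_iff_strict)
  have fA: "finite A" unfolding A_def by (rule finite_subset[of _ "{..<k}"]) auto
  define a where "a = Max A"
  have aA: "a \<in> A" unfolding a_def using fA \<open>m \<in> A\<close> by (intro Max_in) auto
  have "lam (Suc a) = 0"
  proof (cases "Suc a = k")
    case False
    then have "Suc a < k" using aA by (simp add: A_def)
    moreover have "Suc a \<notin> A" using Max_ge[OF fA] by (metis Suc_n_not_le_n a_def)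
    ultimately show ?thesis using nn[rule_format, of "Suc a"] by (simp add: A_def)
  qed (use k in simp)
  moreover have "k + j = a + (k - a + j)" "k - a + j \<ge> 1" using aA by (auto simp: A_def)
  moreover have "lam a > 0" using aA by (simp add: A_def)
  ultimately show ?thesis using multiplier_no_gap[OF ms nn] by metis
qed

text \<open>By Turan's inequality the ratios lam_{k+1}/lam_k do not increase from the first
  positive term lam_m on (a zero term is followed by zeros only).\<close>
lemma multiplier_ratio_bound:
  assumes ms: "multiplier_sequence lam" and nn: "\<forall>n. lam n \<ge> 0" and m: "lam m > 0"
  shows "lam (Suc (m + i)) * lam m \<le> lam (Suc m) * lam (m + i)"
proof (induction i)
  case (Suc i)
  show ?case
  proof (cases "lam (m + i) = 0")
    case True
    then have "lam (m + i + 2) = 0"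
      using multiplier_zero_persists[OF ms nn m, of "m + i" 2] by simp
    then show ?thesis using nn m by (simp add: numeral_2_eq_2)
  next
    case False
    then have pos: "lam (m + i) > 0" using nn[rule_format, of "m + i"] by linarith
    have "lam (m + i) * (lam (Suc (Suc (m + i))) * lam m) \<le> (lam (Suc (m + i)))\<^sup>2 * lam m"
      using multiplier_turan[OF ms, of "m + i"] m by (simp add: mult_right_mono mult.assoc[symmetric])
    also have "\<dots> \<le> lam (Suc (m + i)) * (lam (Suc m) * lam (m + i))"
      using Suc nn by (simp add: power2_eq_square mult.assoc mult_left_mono)
    finally show ?thesis using pos by (simp add: algebra_simps mult_le_cancel_left)
  qed
qed simp

lemma multiplier_exp_bound:
  assumes ms: "multiplier_sequence lam" and nn: "\<forall>n. lam n \<ge> 0"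
    and m: "lam m > 0" "\<forall>k<m. lam k = 0"
  obtains C \<rho> where "C \<ge> 0" "\<rho> \<ge> 1" "\<forall>k. lam k \<le> C * \<rho> ^ k"
proof -
  define r where "r = lam (Suc m) / lam m"
  have r0: "r \<ge> 0" using m nn by (simp add: r_def)
  have bnd: "lam (m + i) \<le> lam m * r ^ i" for i
  proof (induction i)
    case (Suc i)
    have "lam (m + Suc i) \<le> r * lam (m + i)"
      using multiplier_ratio_bound[OF ms nn m(1), of i] m by (simp add: r_def field_simps)
    also have "\<dots> \<le> r * (lam m * r ^ i)" using Suc r0 by (simp add: mult_left_mono)
    finally show ?case by (simp add: algebra_simps)
  qed simp
  have "lam k \<le> lam m * (r + 1) ^ k" for k
  proof (cases "k < m")
    case False
    then obtain i where i: "k = m + i" using le_iff_add by (metis not_less)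
    have "lam k \<le> lam m * r ^ i" using bnd i by simp
    also have "\<dots> \<le> lam m * (r + 1) ^ k"
      using m r0 i by (intro mult_left_mono order.trans[OF power_mono power_increasing]) auto
    finally show ?thesis .
  qed (use m r0 in simp)
  then show ?thesis using m r0 by (intro that[of "lam m" "r + 1"]) auto
qed

section \<open>Hermite polynomials and the coefficients of T(x^n)\<close>

lemma coeff_hermite_above_degree: "i > k \<Longrightarrow> coeff (hermite k) i = 0"
  by (induction k arbitrary: i rule: hermite.induct) (auto simp: coeff_1 coeff_pCons split: nat.splits)

lemma coeff_hermite_lead: "coeff (hermite k) k = 2 ^ k"
proof (induction k rule: hermite.induct)
  case 1 then show ?case by simp
next
  case 2 then show ?case by simp
next
  case (3 n)
  have "coeff (hermite n) (Suc (Suc n)) = 0" by (simp add: coeff_hermite_above_degree)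
  then show ?case using 3 by (simp add: coeff_pCons)
qed

lemma coeff_hermite_parity: "odd (i + k) \<Longrightarrow> coeff (hermite k) i = 0"
  by (induction k arbitrary: i rule: hermite.induct)
     (auto simp: coeff_1 coeff_pCons dest: odd_pos split: nat.splits)

lemma coeff_hermite_bound: "\<bar>coeff (hermite k) i\<bar> \<le> 4 ^ k * fact k"
proof (induction k arbitrary: i rule: hermite.induct)
  case 1 then show ?case by (simp add: coeff_1)
next
  case 2 then show ?case by (auto simp: coeff_pCons split: nat.splits)
next
  case (3 n)
  let ?A = "4 ^ Suc n * fact (Suc n) :: real"
  let ?B = "4 ^ n * fact n :: real"
  have a: "\<bar>coeff ([:0, 2:] * hermite (Suc n)) i\<bar> \<le> 2 * ?A"
    using "3.IH"(1)[of "i - 1"] by (cases i) (auto simp: coeff_pCons)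
  have b: "\<bar>coeff (smult (2 * real (Suc n)) (hermite n)) i\<bar> \<le> 2 * real (Suc n) * ?B"
    using "3.IH"(2)[of i] by (simp add: abs_mult)
  have "\<bar>coeff (hermite (Suc (Suc n))) i\<bar> \<le> 2 * ?A + 2 * real (Suc n) * ?B"
    using a b by (simp add: abs_triangle_ineq4 order_trans[OF abs_triangle_ineq4])
  also have "2 * ?A + 2 * real (Suc n) * ?B = 10 * (4 ^ n * fact (Suc n))"
    by (simp add: fact_Suc algebra_simps)
  also have "\<dots> \<le> 4 ^ Suc (Suc n) * fact (Suc (Suc n))"
  proof -
    have "(10::real) \<le> 16 * real (Suc (Suc n))" by simp
    then have "10 * (4 ^ n * fact (Suc n)) \<le> 16 * real (Suc (Suc n)) * (4 ^ n * fact (Suc n))"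
      by (intro mult_right_mono) auto
    then show ?thesis by (simp add: fact_Suc[of "Suc n"] algebra_simps del: fact_Suc)
  qed
  finally show ?case .
qed

lemma x_times_hermite:
  "[:0, 1:] * hermite k = smult (1/2) (hermite (Suc k)) + smult (real k) (hermite (k - 1))"
proof (cases k)
  case 0 then show ?thesis by simp
next
  case (Suc j)
  then show ?thesis by (simp add: algebra_simps smult_add_right poly_eq_iff coeff_pCons split: nat.splits)
qed

text \<open>Coefficients of x^n in the Hermite basis, x^n = \<Sum>k\<le>n. xpow_hcoeff n k * H_k, defined
  by the recursion induced by multiplying with x.\<close>
fun xpow_hcoeff :: "nat \<Rightarrow> nat \<Rightarrow> real" where
  "xpow_hcoeff 0 k = (if k = 0 then 1 else 0)"
| "xpow_hcoeff (Suc n) k = (if k = 0 then 0 else xpow_hcoeff n (k - 1) / 2) + real (k + 1) * xpow_hcoeff n (k + 1)"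

lemma xpow_hcoeff_above_degree: "k > n \<Longrightarrow> xpow_hcoeff n k = 0"
  by (induction n arbitrary: k) auto

lemma xpow_hcoeff_lead: "xpow_hcoeff n n = 1 / 2 ^ n"
  by (induction n) (auto simp: xpow_hcoeff_above_degree)

lemma xpow_hcoeff_parity: "odd (n + k) \<Longrightarrow> xpow_hcoeff n k = 0"
  by (induction n arbitrary: k) (auto dest: odd_pos)

lemma xpow_hcoeff_nonneg: "xpow_hcoeff n k \<ge> 0"
  by (induction n arbitrary: k) auto

text \<open>The bound 0 \<le> xpow_hcoeff n k \<le> n!/k! (the exact value is n!/(2^n k! ((n-k)/2)!)).\<close>
lemma xpow_hcoeff_bound: "xpow_hcoeff n k * fact k \<le> fact n"
proof (induction n arbitrary: k)
  case 0 then show ?case by simp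
next
  case (Suc n)
  show ?case
  proof (cases "k > Suc n")
    case True then show ?thesis by (simp add: xpow_hcoeff_above_degree)
  next
    case False
    have t2: "real (k + 1) * xpow_hcoeff n (k + 1) * fact k \<le> (if k < n then fact n else 0)"
    proof (cases "k < n")
      case True
      show ?thesis using Suc[of "k+1"] True by (simp add: fact_Suc algebra_simps)
    next
      case False then show ?thesis by (simp add: xpow_hcoeff_above_degree)
    qed
    have t1: "(if k = 0 then 0 else xpow_hcoeff n (k - 1) / 2) * fact k \<le> real k / 2 * fact n"
    proof (cases k)
      case 0 then show ?thesis by simp
    next
      case (Suc j)
      have "xpow_hcoeff n j / 2 * fact (Suc j) = real (Suc j) / 2 * (xpow_hcoeff n j * fact j)"
        by (simp add: fact_Suc algebra_simps)
      also have "\<dots> \<le> real (Suc j) / 2 * fact n" using Suc.IH[of j] by (intro mult_left_mono) auto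
      finally show ?thesis using Suc by simp
    qed
    have "xpow_hcoeff (Suc n) k * fact k \<le> real k / 2 * fact n + (if k < n then fact n else 0)"
      using t1 t2 by (simp add: distrib_right)
    also have "\<dots> \<le> fact (Suc n)"
    proof (cases "k < n")
      case True
      have "(real k / 2 + 1) * fact n \<le> real (Suc n) * fact n"
        using True by (intro mult_right_mono) auto
      then have "real k / 2 * fact n + fact n \<le> real (Suc n) * fact n"
        by (simp add: algebra_simps)
      then show ?thesis using True by (simp add: fact_Suc)
    next
      case False
      have "real k / 2 * fact n \<le> real (Suc n) * fact n"
        using \<open>\<not> k > Suc n\<close> by (intro mult_right_mono) auto
      then show ?thesis using False by (simp add: fact_Suc)
    qed
    finally show ?thesis .
  qed
qed

text \<open>Multiplying the expansion of x^n by x and using the recurrence for x H_k, after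
  shifting indices, gives the expansion of x^(n+1).\<close>
lemma monom_hermite_expansion: "monom 1 n = (\<Sum>k\<le>n. smult (xpow_hcoeff n k) (hermite k))"
proof (induction n)
  case 0 then show ?case by simp
next
  case (Suc n)
  define g where "g k = smult (if k = 0 then 0 else xpow_hcoeff n (k - 1) / 2) (hermite k)" for k
  define h where "h k = smult (real (k + 1) * xpow_hcoeff n (k + 1)) (hermite k)" for k
  have "monom 1 (Suc n) = [:0, 1:] * monom (1::real) n"
    by (simp add: monom_Suc)
  also have "\<dots> = (\<Sum>k\<le>n. smult (xpow_hcoeff n k) ([:0, 1:] * hermite k))"
    by (subst Suc) (simp add: sum_distrib_left mult_smult_right)
  also have "\<dots> = (\<Sum>k\<le>n. smult (xpow_hcoeff n k * (1/2)) (hermite (Suc k)))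
       + (\<Sum>k\<le>n. smult (xpow_hcoeff n k * real k) (hermite (k - 1)))"
    by (simp only: x_times_hermite smult_add_right sum.distrib smult_smult)
  also have "(\<Sum>k\<le>n. smult (xpow_hcoeff n k * (1/2)) (hermite (Suc k))) = (\<Sum>k\<le>Suc n. g k)"
    by (subst sum.atMost_Suc_shift) (simp add: g_def)
  also have "(\<Sum>k\<le>n. smult (xpow_hcoeff n k * real k) (hermite (k - 1))) = (\<Sum>k\<le>Suc n. h k)"
  proof -
    have "(\<Sum>k\<le>n. smult (xpow_hcoeff n k * real k) (hermite (k - 1)))
        = (\<Sum>k\<le>Suc n. smult (xpow_hcoeff n k * real k) (hermite (k - 1)))"
      by (rule sum_atMost_extend[symmetric]) (auto simp: xpow_hcoeff_above_degree)
    also have "\<dots> = (\<Sum>k\<le>n. h k)"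
      by (subst sum.atMost_Suc_shift) (simp add: h_def algebra_simps)
    also have "\<dots> = (\<Sum>k\<le>Suc n. h k)"
      by (rule sum_atMost_extend[symmetric]) (auto simp: h_def xpow_hcoeff_above_degree)
    finally show ?thesis .
  qed
  also have "(\<Sum>k\<le>Suc n. g k) + (\<Sum>k\<le>Suc n. h k) = (\<Sum>k\<le>Suc n. smult (xpow_hcoeff (Suc n) k) (hermite k))"
    unfolding sum.distrib[symmetric] by (intro sum.cong) (auto simp: g_def h_def smult_add_left)
  finally show ?case .
qed

text \<open>The coefficient of x^i in T(x^n), where T(H_k) = lam_k H_k.\<close>
definition image_coeff :: "(nat \<Rightarrow> real) \<Rightarrow> nat \<Rightarrow> nat \<Rightarrow> real" where
  "image_coeff lam n i = (\<Sum>k\<le>n. xpow_hcoeff n k * lam k * coeff (hermite k) i)"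

lemma additive_zero:
  fixes T :: "real poly \<Rightarrow> real poly"
  assumes "\<forall>p q. T (p + q) = T p + T q"
  shows "T 0 = (0 :: real poly)"
proof -
  have "T 0 = T 0 + T 0" using assms[rule_format, of 0 0] by simp
  then show ?thesis by simp
qed

lemma additive_sum:
  fixes T :: "real poly \<Rightarrow> real poly"
  assumes "\<forall>p q. T (p + q) = T p + T q"
  shows "finite A \<Longrightarrow> T (\<Sum>k\<in>A. f k) = (\<Sum>k\<in>A. T (f k))"
  by (induction A rule: finite_induct) (auto simp: additive_zero[OF assms] assms)

text \<open>Expanding x^n in the Hermite basis, on which T acts diagonally.\<close>
lemma coeff_T_monom:
  assumes add: "\<forall>p q. T (p + q) = T p + T q"
    and sm: "\<forall>c p. T (smult c p) = smult c (T p)"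
    and ev: "\<forall>n. T (hermite n) = smult (lam n) (hermite n)"
  shows "coeff (T (monom 1 n)) i = image_coeff lam n i"
proof -
  have "T (monom 1 n) = (\<Sum>k\<le>n. smult (xpow_hcoeff n k * lam k) (hermite k))"
    by (subst monom_hermite_expansion) (simp add: additive_sum[OF add] sm ev)
  then show ?thesis by (simp add: image_coeff_def coeff_sum)
qed

lemma image_coeff_above_degree: "i > n \<Longrightarrow> image_coeff lam n i = 0"
  by (simp add: image_coeff_def coeff_hermite_above_degree)

lemma image_coeff_lead: "image_coeff lam n n = lam n"
proof -
  have "image_coeff lam n n = (\<Sum>k\<in>insert n {..<n}. xpow_hcoeff n k * lam k * coeff (hermite k) n)"
    unfolding image_coeff_def by (intro sum.cong) auto
  also have "\<dots> = xpow_hcoeff n n * lam n * coeff (hermite n) n"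
    by (subst sum.insert) (auto simp: coeff_hermite_above_degree)
  finally show ?thesis by (simp add: xpow_hcoeff_lead coeff_hermite_lead)
qed

lemma image_coeff_parity: "odd (i + n) \<Longrightarrow> image_coeff lam n i = 0"
  unfolding image_coeff_def
proof (intro sum.neutral ballI)
  fix k assume "odd (i + n)"
  then have "odd (n + k) \<or> odd (i + k)" by auto
  then show "xpow_hcoeff n k * lam k * coeff (hermite k) i = 0"
    using xpow_hcoeff_parity coeff_hermite_parity by auto
qed

lemma image_coeff_bound:
  assumes nn: "\<forall>k. lam k \<ge> 0" and bd: "\<forall>k. lam k \<le> C * \<rho> ^ k" and r: "\<rho> \<ge> 1"
  shows "\<bar>image_coeff lam n i\<bar> \<le> fact n * real (n + 1) * C * (4 * \<rho>) ^ n"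
proof -
  have C: "C \<ge> 0" using nn[rule_format, of 0] bd[rule_format, of 0] by simp
  have "\<bar>image_coeff lam n i\<bar> \<le> (\<Sum>k\<le>n. \<bar>xpow_hcoeff n k * lam k * coeff (hermite k) i\<bar>)"
    unfolding image_coeff_def by (rule sum_abs)
  also have "\<dots> \<le> (\<Sum>k\<le>n. fact n * C * (4 * \<rho>) ^ n)"
  proof (intro sum_mono)
    fix k assume k: "k \<in> {..n}"
    have "\<bar>xpow_hcoeff n k * lam k * coeff (hermite k) i\<bar> = xpow_hcoeff n k * lam k * \<bar>coeff (hermite k) i\<bar>"
      using nn xpow_hcoeff_nonneg by (simp add: abs_mult)
    also have "\<dots> \<le> xpow_hcoeff n k * lam k * (4 ^ k * fact k)"
      using nn xpow_hcoeff_nonneg coeff_hermite_bound by (intro mult_left_mono) auto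
    also have "\<dots> = (xpow_hcoeff n k * fact k) * (lam k * 4 ^ k)" by (simp add: algebra_simps)
    also have "\<dots> \<le> fact n * (C * \<rho> ^ k * 4 ^ k)"
      using nn xpow_hcoeff_nonneg xpow_hcoeff_bound bd C r by (intro mult_mono) auto
    also have "\<dots> \<le> fact n * (C * (4 * \<rho>) ^ n)"
    proof -
      have "(4 * \<rho>) ^ k \<le> (4 * \<rho>) ^ n" using r k by (intro power_increasing) auto
      then have "C * \<rho> ^ k * 4 ^ k \<le> C * (4 * \<rho>) ^ n"
        using C by (simp add: power_mult_distrib mult_left_mono algebra_simps)
      then show ?thesis by (intro mult_left_mono) auto
    qed
    finally show "\<bar>xpow_hcoeff n k * lam k * coeff (hermite k) i\<bar> \<le> fact n * C * (4 * \<rho>) ^ n"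
      by (simp add: algebra_simps)
  qed
  also have "\<dots> = fact n * real (n + 1) * C * (4 * \<rho>) ^ n" by simp
  finally show ?thesis .
qed

section \<open>A roots-of-unity coefficient filter\<close>

text \<open>Averaging h(r w^t) w^{-tj} over the N-th roots of unity w^t extracts, from a power
  series, the sum of the coefficients whose index is congruent to j modulo N.  This gives
  control of individual coefficients by values on a circle, without contour integrals.\<close>

definition unit_root :: "nat \<Rightarrow> complex" where
  "unit_root N = cis (2 * pi / real N)"

lemma norm_unit_root [simp]: "norm (unit_root N) = 1"
  by (simp add: unit_root_def)

lemma unit_root_power: "unit_root N ^ k = cis (2 * pi * real k / real N)"
  unfolding unit_root_def Complex.DeMoivre by (simp add: field_simps)

lemma unit_root_power_eq_1_iff:
  assumes "N > 0"
  shows "unit_root N ^ k = 1 \<longleftrightarrow> N dvd k"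
proof
  assume "N dvd k"
  then obtain q where "k = N * q" by auto
  then have "2 * pi * real k / real N = 2 * pi * real q" using assms by (simp add: field_simps)
  then show "unit_root N ^ k = 1" unfolding unit_root_power by simp
next
  assume "unit_root N ^ k = 1"
  then have "cos (2 * pi * real k / real N) = 1"
    unfolding unit_root_power by (metis Re_complex_of_real cis.sel(1) one_complex.sel(1))
  then obtain n :: int where "2 * pi * real k / real N = real_of_int n * 2 * pi"
    using cos_one_2pi_int by blast
  then have "real k = real_of_int n * real N" using assms by (simp add: field_simps)
  then have "int k = n * int N" by (metis of_int_eq_iff of_int_mult of_int_of_nat_eq)
  then show "N dvd k" by (metis dvd_triv_right int_dvd_int_iff)
qed

lemma unit_root_geometric_sum:
  assumes "N > 0"
  shows "(\<Sum>t<N. (unit_root N ^ k) ^ t) = (if N dvd k then of_nat N else 0)"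
proof (cases "N dvd k")
  case True
  then have "unit_root N ^ k = 1" using unit_root_power_eq_1_iff[OF assms] by simp
  then show ?thesis using True by simp
next
  case False
  then have u: "unit_root N ^ k \<noteq> 1" using unit_root_power_eq_1_iff[OF assms] by simp
  have "(unit_root N ^ k) ^ N = (unit_root N ^ N) ^ k"
    by (simp flip: power_mult add: mult.commute)
  also have "unit_root N ^ N = 1" using unit_root_power_eq_1_iff[OF assms] by simp
  finally show ?thesis using False geometric_sum[OF u, of N] by simp
qed

text \<open>Indicator of l \<equiv> j (mod N), for j \<le> N.\<close>
definition alias_ind :: "nat \<Rightarrow> nat \<Rightarrow> nat \<Rightarrow> real" where
  "alias_ind N j l = (if N dvd (l + N - j) then 1 else 0)"

lemma alias_ind_small:
  assumes "j < N" "l < N"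
  shows "alias_ind N j l = (if l = j then 1 else 0)"
proof (cases "l = j")
  case False
  have "\<not> N dvd (l + N - j)"
  proof
    assume "N dvd (l + N - j)"
    then obtain q where q: "l + N - j = N * q" by auto
    have "0 < l + N - j" "l + N - j < 2 * N" using assms by auto
    then have "q = 1" using q by (auto simp: mult_less_cancel1)
    then show False using q False assms by simp
  qed
  then show ?thesis using False by (simp add: alias_ind_def)
qed (simp add: alias_ind_def)

lemma alias_ind_01: "0 \<le> alias_ind N j l \<and> alias_ind N j l \<le> 1"
  by (simp add: alias_ind_def)

text \<open>root_filter N j r h = (1/N) \<Sum>t<N. h(r w^t) w^(-tj), with w = exp(2 pi i/N).\<close>
definition root_filter :: "nat \<Rightarrow> nat \<Rightarrow> real \<Rightarrow> (complex \<Rightarrow> complex) \<Rightarrow> complex" where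
  "root_filter N j r h =
     (\<Sum>t<N. h (of_real r * unit_root N ^ t) * unit_root N ^ (t * (N - j))) / of_nat N"

lemma root_filter_power_sum:
  assumes "N > 0" "j < N"
  shows "root_filter N j r (\<lambda>z. \<Sum>i\<le>D. of_real (a i) * z ^ i)
       = of_real (\<Sum>i\<le>D. a i * r ^ i * alias_ind N j i)"
proof -
  let ?w = "unit_root N"
  have "(of_real r * ?w ^ t) ^ i * ?w ^ (t * (N - j)) = of_real r ^ i * (?w ^ (i + N - j)) ^ t"
    for t i
  proof -
    have "i + N - j = i + (N - j)" using assms by simp
    then show ?thesis
      by (simp add: power_mult_distrib power_add flip: power_mult) (simp add: mult.commute)
  qed
  then have "(\<Sum>t<N. (\<Sum>i\<le>D. of_real (a i) * (of_real r * ?w ^ t) ^ i) * ?w ^ (t * (N - j)))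
      = (\<Sum>i\<le>D. of_real (a i) * of_real r ^ i * (\<Sum>t<N. (?w ^ (i + N - j)) ^ t))"
    by (simp add: sum_distrib_right sum_distrib_left mult.assoc sum.swap[of _ "{..<N}"])
  also have "\<dots> = (\<Sum>i\<le>D. of_real (a i) * of_real r ^ i * (of_nat N * of_real (alias_ind N j i)))"
    using unit_root_geometric_sum[OF assms(1)] by (intro sum.cong refl) (auto simp: alias_ind_def)
  also have "\<dots> = of_nat N * of_real (\<Sum>i\<le>D. a i * r ^ i * alias_ind N j i)"
    by (simp add: sum_distrib_left algebra_simps)
  finally show ?thesis using assms by (simp add: root_filter_def)
qed

lemma root_filter_poly:
  assumes "N > 0" "j < N"
  shows "root_filter N j r (poly (cpoly Q))
       = of_real (\<Sum>i\<le>degree Q. coeff Q i * r ^ i * alias_ind N j i)"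
  using root_filter_power_sum[OF assms, where D = "degree Q" and a = "coeff Q" and r = r]
  by (simp add: poly_cpoly_sum[OF order.refl, symmetric])

lemma root_filter_diff:
  "root_filter N j r (\<lambda>z. f z - g z) = root_filter N j r f - root_filter N j r g"
  by (simp add: root_filter_def sum_subtractf algebra_simps diff_divide_distrib)

lemma root_filter_norm_le:
  assumes "N > 0" "r \<ge> 0" "\<And>z. cmod z = r \<Longrightarrow> cmod (h z) \<le> M"
  shows "cmod (root_filter N j r h) \<le> M"
proof -
  have "cmod (\<Sum>t<N. h (of_real r * unit_root N ^ t) * unit_root N ^ (t * (N - j)))
      \<le> (\<Sum>t<N. cmod (h (of_real r * unit_root N ^ t) * unit_root N ^ (t * (N - j))))"
    by (rule norm_sum)
  also have "\<dots> \<le> (\<Sum>t<N. M)"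
    using assms(2,3) by (intro sum_mono) (simp add: norm_mult norm_power)
  finally show ?thesis using assms(1) by (simp add: root_filter_def norm_divide field_simps)
qed

lemma root_filter_sums:
  assumes "\<And>z. cmod z = r \<Longrightarrow> (\<lambda>n. s n z) sums h z" "r \<ge> 0"
  shows "(\<lambda>n. root_filter N j r (s n)) sums root_filter N j r h"
  unfolding root_filter_def
  using assms by (intro sums_divide sums_sum sums_mult2) (simp add: norm_mult norm_power)

lemma root_filter_error:
  assumes "j < N" "\<And>i. D < i \<Longrightarrow> a i = 0"
  shows "\<bar>(\<Sum>i\<le>D. a i * alias_ind N j i) - a j\<bar> \<le> (\<Sum>i\<le>D. if N \<le> i then \<bar>a i\<bar> else 0)"
proof -
  have aj: "a j = (\<Sum>i\<le>D. if i = j then a i else 0)"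
    using assms(2)[of j] by (cases "j \<le> D") auto
  have "(\<Sum>i\<le>D. a i * alias_ind N j i) - a j
      = (\<Sum>i\<le>D. a i * alias_ind N j i - (if i = j then a i else 0))"
    unfolding aj by (simp add: sum_subtractf)
  also have "\<dots> = (\<Sum>i\<le>D. a i * (alias_ind N j i - (if i = j then 1 else 0)))"
    by (intro sum.cong) (auto simp: algebra_simps)
  also have "\<bar>\<dots>\<bar> \<le> (\<Sum>i\<le>D. \<bar>a i * (alias_ind N j i - (if i = j then 1 else 0))\<bar>)"
    by (rule sum_abs)
  also have "\<dots> \<le> (\<Sum>i\<le>D. if N \<le> i then \<bar>a i\<bar> else 0)"
  proof (intro sum_mono)
    fix i
    have "\<bar>alias_ind N j i - (if i = j then 1 else 0)\<bar> \<le> 1" using alias_ind_01[of N j i] by auto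
    then show "\<bar>a i * (alias_ind N j i - (if i = j then 1 else 0))\<bar> \<le> (if N \<le> i then \<bar>a i\<bar> else 0)"
      using assms(1) by (auto simp: alias_ind_small abs_mult mult_left_le)
  qed
  finally show ?thesis .
qed

lemma coeff_cauchy_estimate:
  assumes "\<rho> > 0" "\<And>z. cmod z = \<rho> \<Longrightarrow> cmod (poly (cpoly Q) z) \<le> M"
  shows "\<bar>coeff Q l\<bar> * \<rho> ^ l \<le> M"
proof -
  define N where "N = max (degree Q) l + 1"
  have N: "N > 0" "l < N" by (auto simp: N_def)
  have "(\<Sum>i\<le>degree Q. coeff Q i * \<rho> ^ i * alias_ind N l i) = coeff Q l * \<rho> ^ l"
  proof -
    have "(\<Sum>i\<le>degree Q. coeff Q i * \<rho> ^ i * alias_ind N l i)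
        = (\<Sum>i\<le>degree Q. if i = l then coeff Q i * \<rho> ^ i else 0)"
      using N by (intro sum.cong) (auto simp: alias_ind_small N_def)
    then show ?thesis by (auto simp: coeff_eq_0)
  qed
  moreover have "cmod (root_filter N l \<rho> (poly (cpoly Q))) \<le> M"
    using assms by (intro root_filter_norm_le[OF N(1)]) auto
  ultimately have "cmod (of_real (coeff Q l * \<rho> ^ l)) \<le> M"
    by (simp only: root_filter_poly[OF N])
  then show ?thesis using assms(1) by (simp only: norm_of_real abs_mult) simp
qed

section \<open>Convergence of coefficients under uniform convergence on circles\<close>

lemma half_power_tail: "(\<Sum>i\<le>D. if N \<le> i then (1/2::real) ^ i else 0) \<le> 2 * (1/2) ^ N"
proof -
  have "(\<Sum>i\<le>D. if N \<le> i then (1/2::real) ^ i else 0)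
      = (if N \<le> D then 2 * (1/2) ^ N - (1/2) ^ D else 0)"
  proof (induction D)
    case (Suc D)
    then show ?case by (cases "N \<le> D"; cases "N = Suc D") auto
  qed simp
  then show ?thesis by simp
qed

lemma poly_root_filter_error:
  assumes r: "r > 0" and j: "j < N" and bnd: "\<forall>i. \<bar>coeff Q i\<bar> * (2 * r) ^ i \<le> M"
  shows "cmod (root_filter N j r (poly (cpoly Q)) - of_real (coeff Q j * r ^ j)) \<le> 2 * M * (1/2) ^ N"
proof -
  have "\<bar>coeff Q 0\<bar> \<le> M" using bnd[rule_format, of 0] by simp
  then have M: "M \<ge> 0" by linarith
  have "\<bar>(\<Sum>i\<le>degree Q. coeff Q i * r ^ i * alias_ind N j i) - coeff Q j * r ^ j\<bar>
      \<le> (\<Sum>i\<le>degree Q. if N \<le> i then \<bar>coeff Q i * r ^ i\<bar> else 0)"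
    by (rule root_filter_error[OF j, where a = "\<lambda>i. coeff Q i * r ^ i"]) (simp add: coeff_eq_0)
  also have "\<dots> \<le> (\<Sum>i\<le>degree Q. M * (if N \<le> i then (1/2) ^ i else 0))"
  proof (intro sum_mono)
    fix i
    have "\<bar>coeff Q i * r ^ i\<bar> = (\<bar>coeff Q i\<bar> * (2 * r) ^ i) * (1/2) ^ i"
      using r by (simp add: abs_mult power_mult_distrib power_divide)
    also have "\<dots> \<le> M * (1/2) ^ i" using bnd by (intro mult_right_mono) auto
    finally show "(if N \<le> i then \<bar>coeff Q i * r ^ i\<bar> else 0) \<le> M * (if N \<le> i then (1/2) ^ i else 0)"
      by simp
  qed
  also have "\<dots> = M * (\<Sum>i\<le>degree Q. if N \<le> i then (1/2) ^ i else 0)"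
    by (simp only: sum_distrib_left)
  also have "\<dots> \<le> M * (2 * (1/2) ^ N)"
    using M by (intro mult_left_mono half_power_tail)
  finally have err: "\<bar>(\<Sum>i\<le>degree Q. coeff Q i * r ^ i * alias_ind N j i) - coeff Q j * r ^ j\<bar>
      \<le> 2 * M * (1/2) ^ N" by simp
  have "root_filter N j r (poly (cpoly Q)) - of_real (coeff Q j * r ^ j)
      = of_real ((\<Sum>i\<le>degree Q. coeff Q i * r ^ i * alias_ind N j i) - coeff Q j * r ^ j)"
    using j by (simp add: root_filter_poly)
  then show ?thesis using err by (simp only: norm_of_real)
qed

lemma block_root_filter_error:
  assumes R: "R > 0" and j: "j < N" and hi: "\<And>l. D < l \<Longrightarrow> b l = 0"
  shows "\<bar>(\<Sum>l\<le>D. b l * (R / 2) ^ l * alias_ind N j l) - b j * (R / 2) ^ j\<bar>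
         \<le> (\<Sum>l\<le>D. \<bar>b l\<bar> * R ^ l) * (1/2) ^ N"
proof -
  have "\<bar>(\<Sum>l\<le>D. b l * (R / 2) ^ l * alias_ind N j l) - b j * (R / 2) ^ j\<bar>
      \<le> (\<Sum>l\<le>D. if N \<le> l then \<bar>b l * (R / 2) ^ l\<bar> else 0)"
    using root_filter_error[OF j, of D "\<lambda>l. b l * (R / 2) ^ l"] hi by (simp add: mult.assoc)
  also have "\<dots> \<le> (\<Sum>l\<le>D. \<bar>b l\<bar> * R ^ l * (1/2) ^ N)"
  proof (intro sum_mono)
    fix l
    have "(R / 2) ^ l = R ^ l * (1/2) ^ l" by (simp add: power_divide)
    moreover have "N \<le> l \<Longrightarrow> R ^ l * (1/2) ^ l \<le> R ^ l * (1/2::real) ^ N"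
      using R by (intro mult_left_mono power_decreasing) auto
    ultimately show "(if N \<le> l then \<bar>b l * (R / 2) ^ l\<bar> else 0) \<le> \<bar>b l\<bar> * R ^ l * (1/2) ^ N"
      using R by (auto simp: abs_mult mult.assoc intro: mult_left_mono)
  qed
  finally show ?thesis by (simp add: sum_distrib_right)
qed

lemma block_root_filter_abs:
  assumes R: "R > 0"
  shows "\<bar>\<Sum>l\<le>D. b l * (R / 2) ^ l * alias_ind N j l\<bar> \<le> (\<Sum>l\<le>D. \<bar>b l\<bar> * R ^ l)"
proof (rule order.trans[OF sum_abs sum_mono])
  fix l
  have "(R / 2) ^ l * alias_ind N j l \<le> (R / 2) ^ l"
    using R alias_ind_01[of N j l] by (intro mult_left_le) auto
  also have "\<dots> \<le> R ^ l" using R by (intro power_mono) auto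
  finally show "\<bar>b l * (R / 2) ^ l * alias_ind N j l\<bar> \<le> \<bar>b l\<bar> * R ^ l"
    using R alias_ind_01[of N j l] by (simp add: abs_mult mult.assoc mult_left_mono)
qed

text \<open>The same for a function given by a double series \<Sum>n \<Sum>l\<le>D n e n l z^l converging
  absolutely on the disc of radius R = 2r; the filter picks the coefficient
  \<Sum>n\<le>j e n j of z^j (only n \<le> j contribute).\<close>
lemma series_root_filter_error:
  fixes e :: "nat \<Rightarrow> nat \<Rightarrow> real" and F :: "complex \<Rightarrow> complex"
  assumes R: "R > 0" and j: "j < N"
    and e_hi: "\<And>n l. D n < l \<Longrightarrow> e n l = 0" and e_lo: "\<And>n l. l < n \<Longrightarrow> e n l = 0"
    and summ: "summable (\<lambda>n. \<Sum>l\<le>D n. \<bar>e n l\<bar> * R ^ l)"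
    and Fs: "\<And>z. cmod z \<le> R \<Longrightarrow> (\<lambda>n. \<Sum>l\<le>D n. of_real (e n l) * z ^ l) sums F z"
  shows "cmod (root_filter N j (R / 2) F - of_real ((\<Sum>n\<le>j. e n j) * (R / 2) ^ j))
         \<le> (\<Sum>n. \<Sum>l\<le>D n. \<bar>e n l\<bar> * R ^ l) * (1/2) ^ N"
proof -
  define r where "r = R / 2"
  define B where "B n = (\<Sum>l\<le>D n. \<bar>e n l\<bar> * R ^ l)" for n
  define a where "a n = (\<Sum>l\<le>D n. e n l * r ^ l * alias_ind N j l)" for n
  have sB: "summable B" using summ by (simp add: B_def[abs_def])
  have N: "N > 0" using j by simp
  have a_err: "\<bar>a n - e n j * r ^ j\<bar> \<le> B n * (1/2) ^ N" for n
    unfolding a_def B_def r_def using R j e_hi by (rule block_root_filter_error)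
  have "\<bar>a n\<bar> \<le> B n" for n
    unfolding a_def B_def r_def using R by (rule block_root_filter_abs)
  then have sa: "summable a" by (intro summable_comparison_test[OF _ sB]) auto
  have filt: "root_filter N j r F = of_real (suminf a)"
  proof -
    have "(\<lambda>n. root_filter N j r (\<lambda>z. \<Sum>l\<le>D n. of_real (e n l) * z ^ l)) sums root_filter N j r F"
      using R Fs by (intro root_filter_sums) (auto simp: r_def)
    moreover have "root_filter N j r (\<lambda>z. \<Sum>l\<le>D n. of_real (e n l) * z ^ l) = of_real (a n)" for n
      unfolding a_def by (rule root_filter_power_sum[OF N j])
    ultimately have "(\<lambda>n. of_real (a n)) sums root_filter N j r F" by simp
    then show ?thesis using sums_unique2 sums_of_real[OF summable_sums[OF sa]] by blast
  qed
  have fin: "n \<notin> {..j} \<Longrightarrow> e n j * r ^ j = 0" for n using e_lo by auto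
  have "(\<Sum>n\<le>j. e n j) * r ^ j = (\<Sum>n. e n j * r ^ j)"
    by (subst suminf_finite[where N = "{..j}"]) (auto simp: sum_distrib_right fin)
  then have "suminf a - (\<Sum>n\<le>j. e n j) * r ^ j = (\<Sum>n. a n - e n j * r ^ j)"
    using suminf_diff[OF sa summable_finite[where N = "{..j}", OF _ fin]] by simp
  also have "\<bar>\<dots>\<bar> \<le> (\<Sum>n. B n * (1/2) ^ N)"
    using a_err by (intro norm_suminf_le[where 'a = real, simplified]) (auto intro: summable_mult2 sB)
  also have "\<dots> = suminf B * (1/2) ^ N" by (rule suminf_mult2[symmetric, OF sB])
  finally have "\<bar>suminf a - (\<Sum>n\<le>j. e n j) * r ^ j\<bar> \<le> suminf B * (1/2) ^ N" .
  moreover have "root_filter N j (R / 2) F - of_real ((\<Sum>n\<le>j. e n j) * (R / 2) ^ j)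
      = of_real (suminf a - (\<Sum>n\<le>j. e n j) * r ^ j)"
    using filt by (simp only: r_def of_real_diff)
  ultimately show ?thesis by (simp only: norm_of_real B_def[abs_def])
qed

lemma double_series_norm_bound:
  fixes e :: "nat \<Rightarrow> nat \<Rightarrow> real" and F :: "complex \<Rightarrow> complex"
  assumes summ: "summable (\<lambda>n. \<Sum>l\<le>D n. \<bar>e n l\<bar> * R ^ l)"
    and Fs: "(\<lambda>n. \<Sum>l\<le>D n. of_real (e n l) * z ^ l) sums F z" and z: "cmod z \<le> R"
  shows "cmod (F z) \<le> (\<Sum>n. \<Sum>l\<le>D n. \<bar>e n l\<bar> * R ^ l)"
proof -
  have "cmod (\<Sum>l\<le>D n. of_real (e n l) * z ^ l) \<le> (\<Sum>l\<le>D n. \<bar>e n l\<bar> * R ^ l)" for n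
    by (rule order.trans[OF norm_sum sum_mono])
       (use z in \<open>auto simp: norm_mult norm_power intro!: mult_left_mono power_mono\<close>)
  then have "cmod (\<Sum>n. \<Sum>l\<le>D n. of_real (e n l) * z ^ l) \<le> (\<Sum>n. \<Sum>l\<le>D n. \<bar>e n l\<bar> * R ^ l)"
    by (rule norm_suminf_le[OF _ summ])
  then show ?thesis using Fs by (simp add: sums_iff)
qed

text \<open>Polynomials converging uniformly on a circle to a bounded function eventually have
  uniformly bounded coefficients, by Cauchy's estimate.\<close>
lemma uniform_limit_coeff_bound:
  assumes R: "R > 0" and unif: "uniform_limit (sphere 0 R) (\<lambda>k. poly (cpoly (G k))) F sequentially"
    and F: "\<And>z. cmod z = R \<Longrightarrow> cmod (F z) \<le> S"
  shows "\<forall>\<^sub>F k in sequentially. \<forall>i. \<bar>coeff (G k) i\<bar> * R ^ i \<le> S + 1"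
  using uniform_limitD[OF unif zero_less_one]
proof eventually_elim
  case (elim k)
  have "cmod (poly (cpoly (G k)) z) \<le> S + 1" if "cmod z = R" for z
    using elim that F[OF that] norm_triangle_ineq2[of "poly (cpoly (G k)) z" "F z"]
    by (force simp: dist_norm)
  then show ?case using coeff_cauchy_estimate[OF R] by blast
qed

lemma coeff_close_via_filter:
  fixes e :: "nat \<Rightarrow> nat \<Rightarrow> real" and F :: "complex \<Rightarrow> complex"
  assumes R: "R > 0" and N: "j < N"
    and e_hi: "\<And>n l. D n < l \<Longrightarrow> e n l = 0" and e_lo: "\<And>n l. l < n \<Longrightarrow> e n l = 0"
    and summ: "summable (\<lambda>n. \<Sum>l\<le>D n. \<bar>e n l\<bar> * R ^ l)"
    and Fs: "\<And>z. cmod z \<le> R \<Longrightarrow> (\<lambda>n. \<Sum>l\<le>D n. of_real (e n l) * z ^ l) sums F z"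
    and S: "S = (\<Sum>n. \<Sum>l\<le>D n. \<bar>e n l\<bar> * R ^ l)"
    and bnd: "\<forall>i. \<bar>coeff Q i\<bar> * R ^ i \<le> S + 1"
    and close: "\<forall>z. cmod z = R / 2 \<longrightarrow> cmod (poly (cpoly Q) z - F z) < \<delta>"
  shows "\<bar>coeff Q j - (\<Sum>n\<le>j. e n j)\<bar> * (R / 2) ^ j \<le> (3 * S + 2) * (1/2) ^ N + \<delta>"
proof -
  define r where "r = R / 2"
  define c where "c = (\<Sum>n\<le>j. e n j)"
  let ?fQ = "root_filter N j r (poly (cpoly Q))" and ?fF = "root_filter N j r F"
  have "cmod (of_real (coeff Q j * r ^ j) - ?fQ) \<le> 2 * (S + 1) * (1/2) ^ N"
    using poly_root_filter_error[of r j N Q "S + 1"] R N bnd by (simp add: r_def norm_minus_commute)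
  moreover have "cmod (?fQ - ?fF) \<le> \<delta>"
    using close N R by (simp add: r_def root_filter_diff[symmetric])
       (intro root_filter_norm_le, auto simp: less_imp_le)
  moreover have "cmod (?fF - of_real (c * r ^ j)) \<le> S * (1/2) ^ N"
    using series_root_filter_error[OF R N e_hi e_lo summ Fs] by (simp add: S c_def r_def)
  ultimately have "cmod (of_real (coeff Q j * r ^ j) - of_real (c * r ^ j))
      \<le> 2 * (S + 1) * (1/2) ^ N + \<delta> + S * (1/2) ^ N"
    by (meson norm_diff_triangle_le add_mono)
  then have "\<bar>coeff Q j * r ^ j - c * r ^ j\<bar> \<le> (3 * S + 2) * (1/2) ^ N + \<delta>"
    by (simp only: of_real_diff[symmetric] norm_of_real) (simp add: algebra_simps)
  moreover have "\<bar>coeff Q j * r ^ j - c * r ^ j\<bar> = \<bar>coeff Q j - c\<bar> * r ^ j"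
    using R by (simp add: abs_mult left_diff_distrib[symmetric] r_def)
  ultimately show ?thesis by (simp add: r_def c_def)
qed

lemma coeff_convergence_on_circles:
  fixes e :: "nat \<Rightarrow> nat \<Rightarrow> real" and G :: "nat \<Rightarrow> real poly" and F :: "complex \<Rightarrow> complex"
  assumes R: "R > 0"
    and e_hi: "\<And>n l. D n < l \<Longrightarrow> e n l = 0" and e_lo: "\<And>n l. l < n \<Longrightarrow> e n l = 0"
    and summ: "summable (\<lambda>n. \<Sum>l\<le>D n. \<bar>e n l\<bar> * R ^ l)"
    and Fs: "\<And>z. cmod z \<le> R \<Longrightarrow> (\<lambda>n. \<Sum>l\<le>D n. of_real (e n l) * z ^ l) sums F z"
    and unif: "uniform_limit (sphere 0 R \<union> sphere 0 (R / 2)) (\<lambda>k. poly (cpoly (G k))) F sequentially"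
  shows "(\<lambda>k. coeff (G k) j) \<longlonglongrightarrow> (\<Sum>n\<le>j. e n j)"
proof -
  define S where "S = (\<Sum>n. \<Sum>l\<le>D n. \<bar>e n l\<bar> * R ^ l)"
  have S0: "S \<ge> 0" unfolding S_def using R summ by (intro suminf_nonneg sum_nonneg) auto
  have F_bound: "cmod (F z) \<le> S" if "cmod z \<le> R" for z
    unfolding S_def using summ Fs[OF that] that by (rule double_series_norm_bound)
  have coeff_bound: "\<forall>\<^sub>F k in sequentially. \<forall>i. \<bar>coeff (G k) i\<bar> * R ^ i \<le> S + 1"
    using uniform_limit_on_subset[OF unif] F_bound by (intro uniform_limit_coeff_bound[OF R]) auto
  have close: "\<forall>\<^sub>F k in sequentially. \<forall>z. cmod z = R / 2 \<longrightarrow> cmod (poly (cpoly (G k)) z - F z) < \<delta>"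
    if "\<delta> > 0" for \<delta>
    using uniform_limitD[OF unif that] by eventually_elim (auto simp: dist_norm)
  show ?thesis
    unfolding tendsto_iff dist_real_def
  proof (intro allI impI)
    fix \<epsilon> :: real assume \<epsilon>: "\<epsilon> > 0"
    define \<delta> where "\<delta> = \<epsilon> * (R / 2) ^ j / 2"
    have \<delta>: "\<delta> > 0" using \<epsilon> R by (simp add: \<delta>_def)
    obtain N0 where N0: "(1/2::real) ^ N0 < \<delta> / (3 * S + 2)"
      using real_arch_pow_inv[of "\<delta> / (3 * S + 2)" "1/2"] \<delta> S0 by auto
    define N where "N = max N0 (Suc j)"
    have N: "j < N" by (simp add: N_def)
    have "(1/2::real) ^ N \<le> (1/2) ^ N0" by (intro power_decreasing) (auto simp: N_def)
    then have "(3 * S + 2) * (1/2::real) ^ N \<le> (3 * S + 2) * (1/2) ^ N0"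
      using S0 by (intro mult_left_mono) auto
    also have "\<dots> < \<delta>" using N0 S0 by (simp add: pos_less_divide_eq mult.commute)
    finally have small: "(3 * S + 2) * (1/2::real) ^ N < \<delta>" .
    show "\<forall>\<^sub>F k in sequentially. \<bar>coeff (G k) j - (\<Sum>n\<le>j. e n j)\<bar> < \<epsilon>"
      using coeff_bound close[OF \<delta>]
    proof eventually_elim
      case (elim k)
      have "\<bar>coeff (G k) j - (\<Sum>n\<le>j. e n j)\<bar> * (R / 2) ^ j < 2 * \<delta>"
        using coeff_close_via_filter[OF R N e_hi e_lo summ Fs S_def elim] small by linarith
      then show ?case using R by (simp add: \<delta>_def)
    qed
  qed
qed

section \<open>Slices of real stable polynomials\<close>

text \<open>For \<alpha> > 0 the line z \<mapsto> (\<alpha> z, z) maps the upper half plane into the product of upper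
  half planes, so the restriction of a real stable polynomial to it is real-rooted.\<close>
lemma stable_slice_real_rooted:
  assumes rp: "real_poly2 p" and st: "stable2 p" and \<alpha>: "\<alpha> > 0"
  obtains Q where "\<And>z. poly (cpoly Q) z = p (of_real \<alpha> * z) z" "real_rooted Q"
proof -
  obtain N c where pc: "\<forall>x y. p x y = (\<Sum>i\<le>N. \<Sum>j\<le>N. of_real (c i j) * x ^ i * y ^ j)"
    using rp unfolding real_poly2_def by blast
  define Q where "Q = (\<Sum>i\<le>N. \<Sum>j\<le>N. monom (c i j * \<alpha> ^ i) (i + j))"
  have ev: "poly (cpoly Q) z = p (of_real \<alpha> * z) z" for z
    unfolding Q_def cpoly_sum poly_sum pc[rule_format]
    by (intro sum.cong refl) (simp add: poly_monom power_mult_distrib power_add)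
  have "real_rooted Q"
  proof (rule real_rootedI_upper)
    fix z :: complex assume "Im z > 0"
    then have "Im (of_real \<alpha> * z) > 0" using \<alpha> by simp
    then show "poly (cpoly Q) z \<noteq> 0" using st \<open>Im z > 0\<close> unfolding ev stable2_def by blast
  qed
  with ev show ?thesis by (rule that)
qed

lemma LP2_slice_approximation:
  assumes "LP2 f" and \<alpha>: "\<alpha> > 0"
  obtains G where "\<And>k. real_rooted (G k)"
    and "\<And>K. compact K \<Longrightarrow>
           uniform_limit K (\<lambda>k. poly (cpoly (G k))) (\<lambda>z. f (of_real \<alpha> * z) z) sequentially"
proof -
  obtain p where p: "\<forall>k. real_poly2 (p k) \<and> stable2 (p k)"
    and ul: "\<forall>K :: (complex \<times> complex) set. compact K \<longrightarrow>
        uniform_limit K (\<lambda>k z. p k (fst z) (snd z)) (\<lambda>z. f (fst z) (snd z)) sequentially"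
    using assms(1) unfolding LP2_def by blast
  have "\<forall>k. \<exists>Q. (\<forall>z. poly (cpoly Q) z = p k (of_real \<alpha> * z) z) \<and> real_rooted Q"
    using stable_slice_real_rooted p \<alpha> by metis
  then obtain G where G: "\<And>k z. poly (cpoly (G k)) z = p k (of_real \<alpha> * z) z"
    and rr: "\<And>k. real_rooted (G k)"
    by metis
  have "uniform_limit K (\<lambda>k. poly (cpoly (G k))) (\<lambda>z. f (of_real \<alpha> * z) z) sequentially"
    if "compact K" for K
  proof -
    let ?h = "\<lambda>z. (of_real \<alpha> * z, z)"
    have "compact (?h ` K)"
      using that by (intro compact_continuous_image continuous_intros)
    then have "uniform_limit (?h ` K) (\<lambda>k z. p k (fst z) (snd z)) (\<lambda>z. f (fst z) (snd z)) sequentially"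
      using ul by blast
    from uniform_limit_compose'[OF this, of ?h K] show ?thesis
      by (simp add: G[abs_def] image_iff Pi_def)
  qed
  with rr show ?thesis by (rule that)
qed

section \<open>The reflected symbol on a slice\<close>

text \<open>Along x = \<alpha> z, y = z the n-th term of the reflected symbol
  G_T(-x, y) = \<Sum>n (-1)^n T(x^n)(-x) y^n / n! is a polynomial in z supported on the
  degrees n, ..., 2n; slice_coeff lam \<alpha> n l is its coefficient of z^l.\<close>
definition slice_coeff :: "(nat \<Rightarrow> real) \<Rightarrow> real \<Rightarrow> nat \<Rightarrow> nat \<Rightarrow> real" where
  "slice_coeff lam \<alpha> n l =
     (if n \<le> l then (-1) ^ n / fact n * image_coeff lam n (l - n) * (- \<alpha>) ^ (l - n) else 0)"

lemma sum_shift_powers: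
  fixes a :: "nat \<Rightarrow> real"
  shows "(\<Sum>i\<le>n. of_real (a i) * (z::complex) ^ (n + i))
       = (\<Sum>l\<le>2 * n. of_real (if n \<le> l then a (l - n) else 0) * z ^ l)"
proof -
  have "(\<Sum>l\<le>2 * n. of_real (if n \<le> l then a (l - n) else 0) * z ^ l)
      = (\<Sum>l\<in>{n..2*n}. of_real (a (l - n)) * z ^ l)"
    by (rule sum.mono_neutral_cong_right) auto
  also have "\<dots> = (\<Sum>l\<in>{0+n..n+n}. of_real (a (l - n)) * z ^ l)" by (simp add: mult_2)
  also have "\<dots> = (\<Sum>i\<in>{0..n}. of_real (a i) * z ^ (i + n))"
    by (subst sum.shift_bounds_cl_nat_ivl) simp
  finally show ?thesis by (simp add: atLeast0AtMost add.commute)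
qed

lemma symbol_slice_term:
  fixes T :: "real poly \<Rightarrow> real poly" and z :: complex
  assumes cT: "\<And>n i. coeff (T (monom 1 n)) i = image_coeff lam n i"
  shows "(-1) ^ n * poly (map_poly of_real (T (monom 1 n))) (- (of_real \<alpha> * z)) * z ^ n / of_nat (fact n)
      = (\<Sum>l\<le>2 * n. of_real (slice_coeff lam \<alpha> n l) * z ^ l)"
proof -
  define a where "a i = (-1) ^ n / fact n * image_coeff lam n i * (- \<alpha>) ^ i" for i
  have "degree (T (monom 1 n)) \<le> n"
    by (rule degree_le) (simp add: cT image_coeff_above_degree)
  then have pe: "poly (map_poly of_real (T (monom 1 n))) w = (\<Sum>i\<le>n. of_real (image_coeff lam n i) * w ^ i)"
    for w :: complex
    using poly_cpoly_sum by (simp add: cpoly_def cT)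
  have "(-1) ^ n * poly (map_poly of_real (T (monom 1 n))) (- (of_real \<alpha> * z)) * z ^ n / of_nat (fact n)
      = (\<Sum>i\<le>n. (-1) ^ n * (of_real (image_coeff lam n i) * (- (of_real \<alpha> * z)) ^ i) * z ^ n / of_nat (fact n))"
    unfolding pe sum_distrib_left sum_distrib_right sum_divide_distrib ..
  also have "\<dots> = (\<Sum>i\<le>n. of_real (a i) * z ^ (n + i))"
  proof (intro sum.cong refl)
    fix i
    have "(- (of_real \<alpha> * z)) ^ i = of_real ((- \<alpha>) ^ i) * (z ^ i :: complex)"
      by (simp only: power_mult_distrib of_real_power flip: of_real_minus mult_minus_left)
    then show "(-1) ^ n * (of_real (image_coeff lam n i) * (- (of_real \<alpha> * z)) ^ i) * z ^ n / of_nat (fact n)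
        = of_real (a i) * z ^ (n + i)"
      by (simp add: a_def power_add divide_inverse mult_ac)
  qed
  also have "\<dots> = (\<Sum>l\<le>2 * n. of_real (if n \<le> l then a (l - n) else 0) * z ^ l)"
    by (rule sum_shift_powers)
  also have "\<dots> = (\<Sum>l\<le>2 * n. of_real (slice_coeff lam \<alpha> n l) * z ^ l)"
    by (intro sum.cong refl) (simp add: a_def slice_coeff_def)
  finally show ?thesis .
qed

lemma small_poly_bound: "real ((2 * n + 1) * (n + 1)) \<le> 2 * 4 ^ n"
proof (induction n)
  case 0 then show ?case by simp
next
  case (Suc n)
  have "real ((2 * Suc n + 1) * (Suc n + 1)) = real ((2 * n + 1) * (n + 1)) + real (4 * n + 5)"
    by (simp add: algebra_simps)
  also have "\<dots> \<le> 2 * 4 ^ n + real (4 * n + 5)" using Suc by simp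
  also have "real (4 * n + 5) \<le> 6 * 4 ^ n"
  proof -
    have "real (n + 1) \<le> 2 ^ n" using less_exp[of n] by (metis Suc_eq_plus1 Suc_leI of_nat_le_iff of_nat_numeral of_nat_power)
    also have "(2::real) ^ n \<le> 4 ^ n" by (intro power_mono) auto
    finally have "real (n + 1) \<le> 4 ^ n" .
    moreover have "(1::real) \<le> 4 ^ n" by simp
    ultimately show ?thesis by simp
  qed
  finally show ?case by simp
qed

text \<open>With lam_k \<le> C \<rho>^k and \<alpha> \<ge> 1 the double series of slice coefficients converges
  absolutely on the disc of radius R = 1/(32 \<rho> \<alpha>): each coefficient of the n-th block,
  weighted by R^l, is at most (n + 1) C 8^-n.\<close>
lemma slice_coeff_term_bound:
  assumes nn: "\<forall>k. lam k \<ge> 0" and bd: "\<forall>k. lam k \<le> C * \<rho> ^ k" and \<rho>: "\<rho> \<ge> 1" and \<alpha>: "\<alpha> \<ge> 1"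
    and R: "R = 1 / (32 * \<rho> * \<alpha>)"
  shows "\<bar>slice_coeff lam \<alpha> n l\<bar> * R ^ l \<le> real (n + 1) * C * (1/8) ^ n"
proof -
  have C: "C \<ge> 0" using nn[rule_format, of 0] bd[rule_format, of 0] by simp
  have R0: "R > 0" and \<alpha>R: "\<alpha> * R \<le> 1" and \<rho>R: "4 * \<rho> * R \<le> 1/8"
    using \<rho> \<alpha> mult_mono[OF \<rho> \<alpha>] by (auto simp: R field_simps)
  show ?thesis
  proof (cases "n \<le> l")
    case False
    then show ?thesis using C by (simp add: slice_coeff_def)
  next
    case True
    then obtain i where i: "l = n + i" using le_Suc_ex by blast
    have "\<bar>slice_coeff lam \<alpha> n l\<bar> * R ^ l = \<bar>image_coeff lam n i\<bar> / fact n * (\<alpha> ^ i * R ^ (n + i))"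
      using True i \<alpha> by (simp add: slice_coeff_def abs_mult power_abs)
    also have "\<dots> \<le> (fact n * real (n + 1) * C * (4 * \<rho>) ^ n) / fact n * (\<alpha> ^ i * R ^ (n + i))"
      using image_coeff_bound[OF nn bd \<rho>] R0 \<alpha> by (intro mult_right_mono divide_right_mono) auto
    also have "\<dots> = real (n + 1) * C * (4 * \<rho>) ^ n * ((\<alpha> * R) ^ i * R ^ n)"
      by (simp add: power_add power_mult_distrib)
    also have "\<dots> \<le> real (n + 1) * C * (4 * \<rho>) ^ n * (1 * R ^ n)"
      using \<alpha>R R0 \<alpha> C \<rho> by (intro mult_left_mono mult_right_mono power_le_one) auto
    also have "\<dots> = real (n + 1) * C * (4 * \<rho> * R) ^ n" by (simp add: power_mult_distrib)
    also have "\<dots> \<le> real (n + 1) * C * (1/8) ^ n"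
      using \<rho>R R0 C \<rho> by (intro mult_left_mono power_mono) auto
    finally show ?thesis .
  qed
qed

lemma slice_coeff_summable:
  assumes nn: "\<forall>k. lam k \<ge> 0" and bd: "\<forall>k. lam k \<le> C * \<rho> ^ k" and \<rho>: "\<rho> \<ge> 1" and \<alpha>: "\<alpha> \<ge> 1"
    and R: "R = 1 / (32 * \<rho> * \<alpha>)"
  shows "summable (\<lambda>n. \<Sum>l\<le>2 * n. \<bar>slice_coeff lam \<alpha> n l\<bar> * R ^ l)"
proof -
  have C: "C \<ge> 0" using nn[rule_format, of 0] bd[rule_format, of 0] by simp
  have block_bound: "(\<Sum>l\<le>2 * n. \<bar>slice_coeff lam \<alpha> n l\<bar> * R ^ l) \<le> 2 * C * (1/2) ^ n" for n
  proof -
    have "(\<Sum>l\<le>2 * n. \<bar>slice_coeff lam \<alpha> n l\<bar> * R ^ l) \<le> (\<Sum>l\<le>2 * n. real (n + 1) * C * (1/8) ^ n)"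
      by (intro sum_mono slice_coeff_term_bound[OF assms])
    also have "\<dots> = real ((2 * n + 1) * (n + 1)) * C * (1/8) ^ n" by (simp add: algebra_simps)
    also have "\<dots> \<le> 2 * 4 ^ n * C * (1/8) ^ n"
      using small_poly_bound[of n] C by (intro mult_right_mono) auto
    also have "\<dots> = 2 * C * (1/2) ^ n"
      by (simp add: power_divide field_simps flip: power_mult_distrib)
    finally show ?thesis .
  qed
  have "0 \<le> (\<Sum>l\<le>2 * n. \<bar>slice_coeff lam \<alpha> n l\<bar> * R ^ l)" for n
    using \<rho> \<alpha> by (intro sum_nonneg) (auto simp: R)
  then show ?thesis
    by (intro summable_comparison_test[OF _ summable_mult[OF summable_geometric[of "1/2::real"]],
        of _ "2 * C"]) (use block_bound in auto)
qed

lemma symbol_slice_sums: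
  fixes T :: "real poly \<Rightarrow> real poly"
  assumes cT: "\<And>n i. coeff (T (monom 1 n)) i = image_coeff lam n i"
    and R0: "R \<ge> 0" and summ: "summable (\<lambda>n. \<Sum>l\<le>2 * n. \<bar>slice_coeff lam \<alpha> n l\<bar> * R ^ l)"
    and z: "cmod z \<le> R"
  shows "(\<lambda>n. \<Sum>l\<le>2 * n. of_real (slice_coeff lam \<alpha> n l) * z ^ l) sums symbol T (- (of_real \<alpha> * z)) z"
proof -
  have "cmod (\<Sum>l\<le>2 * n. of_real (slice_coeff lam \<alpha> n l) * z ^ l) \<le> (\<Sum>l\<le>2 * n. \<bar>slice_coeff lam \<alpha> n l\<bar> * R ^ l)"
    for n
    by (rule order.trans[OF norm_sum sum_mono])
       (use z in \<open>auto simp: norm_mult norm_power intro!: mult_left_mono power_mono\<close>)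
  then have "summable (\<lambda>n. \<Sum>l\<le>2 * n. of_real (slice_coeff lam \<alpha> n l) * z ^ l)"
    by (intro summable_comparison_test[OF _ summ]) auto
  then show ?thesis
    unfolding symbol_def by (simp only: symbol_slice_term[OF cT] summable_sums)
qed

lemma lower_power_sum_bound:
  fixes d :: "nat \<Rightarrow> real" and q :: "nat \<Rightarrow> nat"
  assumes \<alpha>: "\<alpha> \<ge> 1" and low: "\<And>n. n \<in> A \<Longrightarrow> d n \<noteq> 0 \<Longrightarrow> q n < k"
  shows "\<bar>\<Sum>n\<in>A. d n * \<alpha> ^ q n\<bar> \<le> (\<Sum>n\<in>A. \<bar>d n\<bar>) * \<alpha> ^ (k - 1)"
proof -
  have "\<bar>d n * \<alpha> ^ q n\<bar> \<le> \<bar>d n\<bar> * \<alpha> ^ (k - 1)" if "n \<in> A" for n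
  proof (cases "d n = 0")
    case False
    then have "q n \<le> k - 1" using low that by fastforce
    then have "\<alpha> ^ q n \<le> \<alpha> ^ (k - 1)" using \<alpha> by (intro power_increasing)
    then show ?thesis using \<alpha> by (simp add: abs_mult mult_left_mono)
  qed simp
  then have "\<bar>\<Sum>n\<in>A. d n * \<alpha> ^ q n\<bar> \<le> (\<Sum>n\<in>A. \<bar>d n\<bar> * \<alpha> ^ (k - 1))"
    by (intro order.trans[OF sum_abs] sum_mono)
  then show ?thesis by (simp add: sum_distrib_right)
qed

lemma dominant_power_sum_pos:
  fixes d :: "nat \<Rightarrow> real" and q :: "nat \<Rightarrow> nat"
  assumes S: "finite S" "k \<in> S" and d0: "d k > 0"
    and others: "\<And>n. n \<in> S \<Longrightarrow> n \<noteq> k \<Longrightarrow> q n < q k \<or> d n = 0"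
  shows "\<exists>\<alpha>0\<ge>1. \<forall>\<alpha>\<ge>\<alpha>0. (\<Sum>n\<in>S. d n * \<alpha> ^ q n) > 0"
proof (intro exI[of _ "(\<Sum>n\<in>S - {k}. \<bar>d n\<bar>) / d k + 1"] conjI allI impI)
  define D where "D = (\<Sum>n\<in>S - {k}. \<bar>d n\<bar>)"
  have D0: "D \<ge> 0" unfolding D_def by (intro sum_nonneg) auto
  then show "D / d k + 1 \<ge> 1" using d0 by simp
  fix \<alpha> :: real assume \<alpha>: "D / d k + 1 \<le> \<alpha>"
  then have \<alpha>1: "\<alpha> \<ge> 1" using D0 d0 by (smt (verit) divide_nonneg_pos)
  have "\<bar>\<Sum>n\<in>S - {k}. d n * \<alpha> ^ q n\<bar> \<le> D * \<alpha> ^ (q k - 1)"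
    unfolding D_def using others by (intro lower_power_sum_bound[OF \<alpha>1]) auto
  moreover have "D * \<alpha> ^ (q k - 1) < d k * \<alpha> ^ q k"
  proof (cases "q k = 0")
    case True
    have "D = 0" unfolding D_def using others True by (intro sum.neutral) auto
    then show ?thesis using True d0 by simp
  next
    case False
    have "D < d k * \<alpha>" using \<alpha> d0 by (simp add: field_simps)
    then have "D * \<alpha> ^ (q k - 1) < d k * \<alpha> * \<alpha> ^ (q k - 1)"
      using \<alpha>1 by (intro mult_strict_right_mono) auto
    also have "\<dots> = d k * \<alpha> ^ q k"
      using False by (cases "q k") (auto simp: mult.assoc)
    finally show ?thesis .
  qed
  moreover have "(\<Sum>n\<in>S. d n * \<alpha> ^ q n) = d k * \<alpha> ^ q k + (\<Sum>n\<in>S - {k}. d n * \<alpha> ^ q n)"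
    using S by (simp add: sum.remove)
  ultimately show "(\<Sum>n\<in>S. d n * \<alpha> ^ q n) > 0" by linarith
qed

text \<open>The coefficient of z^{2m} in the slice of the symbol is a polynomial in \<alpha> of degree m
  with leading coefficient lam_m / m! (terms with n < m vanish by degree), hence positive for
  large \<alpha> when lam_m > 0.\<close>
lemma slice_even_coeff_pos:
  assumes "lam m > 0"
  obtains \<alpha>0 where "\<alpha>0 \<ge> 1" "\<And>\<alpha>. \<alpha> \<ge> \<alpha>0 \<Longrightarrow> (\<Sum>n\<le>2 * m. slice_coeff lam \<alpha> n (2 * m)) > 0"
proof -
  define d where "d n = (-1) ^ n / fact n * image_coeff lam n (2 * m - n) * (-1) ^ (2 * m - n)" for n
  have sc: "slice_coeff lam \<alpha> n (2 * m) = d n * \<alpha> ^ (2 * m - n)" if "n \<le> 2 * m" for \<alpha> n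
    using that by (simp add: slice_coeff_def d_def power_mult_distrib[of "-1::real", symmetric])
  have "\<exists>\<alpha>0\<ge>1. \<forall>\<alpha>\<ge>\<alpha>0. (\<Sum>n\<in>{..2 * m}. d n * \<alpha> ^ (2 * m - n)) > 0"
  proof (rule dominant_power_sum_pos[where k = m])
    have "(-1::real) ^ m * (-1) ^ m = 1" by (simp flip: power_add)
    then show "d m > 0"
      using assms by (simp add: d_def image_coeff_lead mult_2 field_simps)
  next
    fix n assume "n \<in> {..2 * m}" "n \<noteq> m"
    then show "2 * m - n < 2 * m - m \<or> d n = 0"
      by (cases "n < m") (auto simp: d_def image_coeff_above_degree)
  qed auto
  then obtain \<alpha>0 where "\<alpha>0 \<ge> 1" "\<forall>\<alpha>\<ge>\<alpha>0. (\<Sum>n\<le>2 * m. d n * \<alpha> ^ (2 * m - n)) > 0"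
    by auto
  then show ?thesis by (intro that[of \<alpha>0]) (auto simp: sc)
qed

text \<open>By parity of the Hermite polynomials the odd coefficients of the slice vanish.\<close>
lemma slice_odd_coeff_zero: "odd j \<Longrightarrow> (\<Sum>n\<le>j. slice_coeff lam \<alpha> n j) = 0"
proof (intro sum.neutral ballI)
  fix n assume "odd j" "n \<in> {..j}"
  then have "image_coeff lam n (j - n) = 0" by (intro image_coeff_parity) auto
  then show "slice_coeff lam \<alpha> n j = 0" by (simp add: slice_coeff_def)
qed

lemma LP2_reflected_symbol_slice:
  fixes T :: "real poly \<Rightarrow> real poly"
  assumes LP: "LP2 (\<lambda>x y. symbol T (- x) y)"
    and cT: "\<And>n i. coeff (T (monom 1 n)) i = image_coeff lam n i"
    and nn: "\<forall>k. lam k \<ge> 0" and growth: "\<forall>k. lam k \<le> C * \<rho> ^ k" "\<rho> \<ge> 1" and \<alpha>: "\<alpha> \<ge> 1"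
  obtains G where "\<And>k. real_rooted (G k)"
    and "\<And>j. (\<lambda>k. coeff (G k) j) \<longlonglongrightarrow> (\<Sum>n\<le>j. slice_coeff lam \<alpha> n j)"
proof -
  define R where "R = 1 / (32 * \<rho> * \<alpha>)"
  have R: "R > 0" using \<alpha> growth(2) by (simp add: R_def)
  have summ: "summable (\<lambda>n. \<Sum>l\<le>2 * n. \<bar>slice_coeff lam \<alpha> n l\<bar> * R ^ l)"
    using slice_coeff_summable[OF nn growth \<alpha> R_def] .
  obtain G where rr: "\<And>k. real_rooted (G k)" and ul: "\<And>K. compact K \<Longrightarrow>
      uniform_limit K (\<lambda>k. poly (cpoly (G k))) (\<lambda>z. symbol T (- (of_real \<alpha> * z)) z) sequentially"
    using LP2_slice_approximation[OF LP, of \<alpha>] \<alpha> by auto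
  have "(\<lambda>k. coeff (G k) j) \<longlonglongrightarrow> (\<Sum>n\<le>j. slice_coeff lam \<alpha> n j)" for j
  proof (rule coeff_convergence_on_circles[OF R _ _ summ])
    fix z :: complex assume "cmod z \<le> R"
    then show "(\<lambda>n. \<Sum>l\<le>2 * n. of_real (slice_coeff lam \<alpha> n l) * z ^ l) sums symbol T (- (of_real \<alpha> * z)) z"
      using R by (intro symbol_slice_sums[OF cT _ summ]) auto
  next
    show "uniform_limit (sphere 0 R \<union> sphere 0 (R / 2)) (\<lambda>k. poly (cpoly (G k)))
        (\<lambda>z. symbol T (- (of_real \<alpha> * z)) z) sequentially"
      by (intro ul compact_Un compact_sphere)
  qed (auto simp: slice_coeff_def image_coeff_above_degree)
  with rr show ?thesis by (rule that)
qed

theorem mainTheorem9: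
  fixes lam :: "nat \<Rightarrow> real" and T :: "real poly \<Rightarrow> real poly"
  assumes "multiplier_sequence lam"
    and "\<not> trivial_seq lam"
    and "\<forall>n. lam n \<ge> 0"
    and "\<forall>p q. T (p + q) = T p + T q"
    and "\<forall>c p. T (smult c p) = smult c (T p)"
    and "\<forall>n. T (hermite n) = smult (lam n) (hermite n)"
  shows "\<not> LP2 (\<lambda>x y. symbol T (- x) y)"
proof
  assume LP: "LP2 (\<lambda>x y. symbol T (- x) y)"
  obtain m where m: "lam m > 0" "lam (Suc m) > 0" "\<forall>k<m. lam k = 0"
    using multiplier_adjacent_positive[OF assms(1,3,2)] .
  obtain C \<rho> where "\<forall>k. lam k \<le> C * \<rho> ^ k" "\<rho> \<ge> 1"
    using multiplier_exp_bound[OF assms(1,3) m(1,3)] by metis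
  note growth = this
  obtain \<alpha>1 where \<alpha>1: "\<alpha>1 \<ge> 1" "\<And>\<alpha>. \<alpha> \<ge> \<alpha>1 \<Longrightarrow> (\<Sum>n\<le>2 * m. slice_coeff lam \<alpha> n (2 * m)) > 0"
    using slice_even_coeff_pos[of lam m, OF m(1)] by blast
  obtain \<alpha>2 where \<alpha>2: "\<And>\<alpha>. \<alpha> \<ge> \<alpha>2 \<Longrightarrow> (\<Sum>n\<le>2 * Suc m. slice_coeff lam \<alpha> n (2 * Suc m)) > 0"
    using slice_even_coeff_pos[of lam "Suc m", OF m(2)] by metis
  define \<alpha> where "\<alpha> = max \<alpha>1 \<alpha>2"
  define c where "c j = (\<Sum>n\<le>j. slice_coeff lam \<alpha> n j)" for j
  have "\<alpha> \<ge> 1" using \<alpha>1(1) by (simp add: \<alpha>_def)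
  then obtain G where "\<And>k. real_rooted (G k)" "\<And>j. (\<lambda>k. coeff (G k) j) \<longlonglongrightarrow> c j"
    using LP2_reflected_symbol_slice[OF LP coeff_T_monom[OF assms(4-6)] assms(3) growth]
    unfolding c_def by blast
  then have newton: "fact (2 * m) * fact (2 * m + 2) * c (2 * m) * c (2 * m + 2)
      \<le> (fact (2 * m + 1))\<^sup>2 * (c (2 * m + 1))\<^sup>2"
    by (rule real_rooted_newton_limit)
  have "c (2 * m + 1) = 0" unfolding c_def by (intro slice_odd_coeff_zero) simp
  moreover have "c (2 * m) > 0" "c (2 * m + 2) > 0"
    using \<alpha>1(2) \<alpha>2 by (auto simp: c_def \<alpha>_def)
  then have "fact (2 * m) * fact (2 * m + 2) * c (2 * m) * c (2 * m + 2) > (0::real)"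
    by simp
  ultimately show False using newton by simp
qed

end
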